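(* For each $m\ge0$ and $k\ge1$ there exists $R$ such that for all $S,T\ge R$, $$X_{S,T}X_{S,T}\equiv^m_k X_{S,T}\,\mathbf{a}\,X_{S,T},$$ where $X_{S,T}=(v^S\mathbf{a}v^S\mathbf{b}v^S)^T$.
   Context: Fix $r,s\ge1$ and the alphabet $B=\{a_1,\dots,a_r,b_1,\dots,b_s,c_1,\dots,c_{2r+2s}\}$. Let $v=c_1a_1c_2\,c_3a_2c_4\cdots c_{2r-1}a_rc_{2r}\,c_{2r+1}b_1c_{2r+2}\cdots c_{2r+2s-1}b_sc_{2r+2s}$, $\mathbf{a}=a_1\cdots a_r$, $\mathbf{b}=b_1\cdots b_s$. For $R>0$, an $R$-word is a word obtained by concatenating factors from $\{\mathbf{a},\mathbf{b},v^R\}$ such that the first and last factors are $v^R$ and among any two consecutive factors at least one is $v^R$ (this factorization is unique). For $R>2m$, the $m$-neighborhoods of an $R$-word are: each factor $v^m\mathbf{a}v^m$ or $v^m\mathbf{b}v^m$ surrounding one of the factors $\mathbf{a}$ or $\mathbf{b}$ of the factorization, together with the prefix $v^m$ and the suffix $v^m$ of the word. Marked $R$-words $(w_1,i_1),(w_2,i_2)$ are $\equiv^m_0$-equivalent if $w_1(i_1)=w_2(i_2)$ and either $i_1,i_2$ lie at the same position within identical $m$-neighborhoods, or neither lies in any $m$-neighborhood. The basic game on marked words: in each round Player 1 picks one word and moves its pebble to a different position; Player 2 must move the pebble in the other word in the same direction, onto the same letter, such that the set of letters strictly jumped over is the same in both words. The $m$-enhanced game additionally requires that after every round the current marked words are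 $\equiv^m_0$-equivalent. For unmarked $R$-words $w_1,w_2$, $w_1\equiv^m_k w_2$ means Player 2 has a winning strategy in the $k$-round $m$-enhanced game in which, in the first round, Player 1 places a pebble on a position of either word and Player 2 responds in the other so that the resulting marked words are $\equiv^m_0$-equivalent, after which $k-1$ further rounds of the $m$-enhanced game are played; Player 2 wins if she responds legally in every round. *)

theory Defs
  imports Main
begin

text \<open>Letters of the alphabet B: LA i = a_i (1..r), LB j = b_j (1..s), LC k = c_k (1..2r+2s).
  Words are lists of letters; positions are 0-indexed.\<close>
datatype letter = LA nat | LB nat | LC nat

definition wpow :: "letter list \<Rightarrow> nat \<Rightarrow> letter list" where
  "wpow w n = concat (replicate n w)"

definition vword :: "nat \<Rightarrow> nat \<Rightarrow> letter list" where
  "vword r s =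
     concat (map (\<lambda>i. [LC (2*i - 1), LA i, LC (2*i)]) [1..<r+1]) @
     concat (map (\<lambda>j. [LC (2*r + 2*j - 1), LB j, LC (2*r + 2*j)]) [1..<s+1])"

definition boldA :: "nat \<Rightarrow> letter list" where
  "boldA r = map LA [1..<r+1]"

definition boldB :: "nat \<Rightarrow> letter list" where
  "boldB s = map LB [1..<s+1]"

definition Rfact :: "nat \<Rightarrow> nat \<Rightarrow> nat \<Rightarrow> letter list list \<Rightarrow> bool" where
  "Rfact r s R fs \<longleftrightarrow>
     fs \<noteq> [] \<and> hd fs = wpow (vword r s) R \<and> last fs = wpow (vword r s) R \<and>
     set fs \<subseteq> {boldA r, boldB s, wpow (vword r s) R} \<and>
     (\<forall>q. Suc q < length fs \<longrightarrow>
        fs ! q = wpow (vword r s) R \<or> fs ! Suc q = wpow (vword r s) R)"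

definition is_Rword :: "nat \<Rightarrow> nat \<Rightarrow> nat \<Rightarrow> letter list \<Rightarrow> bool" where
  "is_Rword r s R w \<longleftrightarrow> (\<exists>fs. Rfact r s R fs \<and> concat fs = w)"

definition the_fact :: "nat \<Rightarrow> nat \<Rightarrow> nat \<Rightarrow> letter list \<Rightarrow> letter list list" where
  "the_fact r s R w = (THE fs. Rfact r s R fs \<and> concat fs = w)"

datatype nkind = NPre | NMid | NSuf

text \<open>m-neighborhoods of an R-word, as triples (kind, start position, content word):
  the prefix v^m, the suffix v^m, and v^m f v^m around each factor f in {a, b}.\<close>
definition nbhds :: "nat \<Rightarrow> nat \<Rightarrow> nat \<Rightarrow> nat \<Rightarrow> letter list \<Rightarrow> (nkind \<times> nat \<times> letter list) set" where
  "nbhds r s R m w =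
     (let fs = the_fact r s R w; vm = wpow (vword r s) m in
      {(NPre, 0, vm), (NSuf, length w - length vm, vm)} \<union>
      {(NMid, length (concat (take q fs)) - length vm, vm @ fs ! q @ vm) | q.
          q < length fs \<and> (fs ! q = boldA r \<or> fs ! q = boldB s)})"

definition in_nb :: "nat \<Rightarrow> nat \<times> letter list \<Rightarrow> bool" where
  "in_nb i pu \<longleftrightarrow> fst pu \<le> i \<and> i < fst pu + length (snd pu)"

definition eq0 :: "nat \<Rightarrow> nat \<Rightarrow> nat \<Rightarrow> nat \<Rightarrow> letter list \<Rightarrow> nat \<Rightarrow> letter list \<Rightarrow> nat \<Rightarrow> bool" where
  "eq0 r s R m w1 i1 w2 i2 \<longleftrightarrow>
     w1 ! i1 = w2 ! i2 \<and>
     ((\<exists>k p1 p2 u. (k, p1, u) \<in> nbhds r s R m w1 \<and> (k, p2, u) \<in> nbhds r s R m w2 \<and>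
          in_nb i1 (p1, u) \<and> in_nb i2 (p2, u) \<and> i1 - p1 = i2 - p2) \<or>
      ((\<forall>k p u. (k, p, u) \<in> nbhds r s R m w1 \<longrightarrow> \<not> in_nb i1 (p, u)) \<and>
       (\<forall>k p u. (k, p, u) \<in> nbhds r s R m w2 \<longrightarrow> \<not> in_nb i2 (p, u))))"

definition jumped :: "letter list \<Rightarrow> nat \<Rightarrow> nat \<Rightarrow> letter set" where
  "jumped w i j = {w ! l | l. min i j < l \<and> l < max i j}"

text \<open>Legal answer of Player 2: pebble in w2 moves from i2 to j2, answering the move i1 \<rightarrow> j1 in w1.\<close>
definition answers :: "letter list \<Rightarrow> nat \<Rightarrow> nat \<Rightarrow> letter list \<Rightarrow> nat \<Rightarrow> nat \<Rightarrow> bool" where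
  "answers w1 i1 j1 w2 i2 j2 \<longleftrightarrow>
     j2 < length w2 \<and> j2 \<noteq> i2 \<and> (i1 < j1 \<longleftrightarrow> i2 < j2) \<and> w2 ! j2 = w1 ! j1 \<and>
     jumped w2 i2 j2 = jumped w1 i1 j1"

fun wins :: "nat \<Rightarrow> nat \<Rightarrow> nat \<Rightarrow> nat \<Rightarrow> nat \<Rightarrow> letter list \<Rightarrow> nat \<Rightarrow> letter list \<Rightarrow> nat \<Rightarrow> bool" where
  "wins r s R m 0 w1 i1 w2 i2 = True"
| "wins r s R m (Suc n) w1 i1 w2 i2 =
     ((\<forall>j1. j1 < length w1 \<and> j1 \<noteq> i1 \<longrightarrow>
        (\<exists>j2. answers w1 i1 j1 w2 i2 j2 \<and> eq0 r s R m w1 j1 w2 j2 \<and> wins r s R m n w1 j1 w2 j2)) \<and>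
      (\<forall>j2. j2 < length w2 \<and> j2 \<noteq> i2 \<longrightarrow>
        (\<exists>j1. answers w2 i2 j2 w1 i1 j1 \<and> eq0 r s R m w1 j1 w2 j2 \<and> wins r s R m n w1 j1 w2 j2)))"

text \<open>w1 \<equiv>^m_k w2 for unmarked R-words: first round is the pebble placement, then k-1 further rounds.\<close>
definition eqk :: "nat \<Rightarrow> nat \<Rightarrow> nat \<Rightarrow> nat \<Rightarrow> nat \<Rightarrow> letter list \<Rightarrow> letter list \<Rightarrow> bool" where
  "eqk r s R m k w1 w2 \<longleftrightarrow>
     (\<forall>i1 < length w1. \<exists>i2 < length w2. eq0 r s R m w1 i1 w2 i2 \<and> wins r s R m (k - 1) w1 i1 w2 i2) \<and>
     (\<forall>i2 < length w2. \<exists>i1 < length w1. eq0 r s R m w1 i1 w2 i2 \<and> wins r s R m (k - 1) w1 i1 w2 i2)"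

definition Xword :: "nat \<Rightarrow> nat \<Rightarrow> nat \<Rightarrow> nat \<Rightarrow> letter list" where
  "Xword r s S T =
     wpow (wpow (vword r s) S @ boldA r @ wpow (vword r s) S @ boldB s @ wpow (vword r s) S) T"

end

theory Submission
  imports Defs
begin

(* The two words are spelled by the block words (v^S a v^S b v^S)^2T and
   (v^S a v^S b v^S)^T a (v^S a v^S b v^S)^T over the blocks v, a, b. These agree on long prefixes
   and suffixes, and away from their ends both look locally like the same periodic word.
   Player 2 answers block by block, keeping the invariant that with n rounds left the pebbles sit at
   the same offset inside blocks whose surroundings of radius 2m+2+2n coincide, and which are either
   equally far from the start (resp. end) of their words or both far from it. A move by at most two
   blocks is copied exactly inside the common surroundings. A longer move crosses a whole v-block in
   both words, so both pebbles jump over every letter, and any target block with the right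
   surroundings will do: near an end she keeps the distance to that end, in the interior she takes a
   block of the right phase, and every phase occurs within three periods. Equal surroundings of
   radius 2m+2 fix the m-neighbourhood around a position, which gives the \<equiv>^m_0 condition. *)

section \<open>Symmetry of the game\<close>

lemma eq0_sym_imp: "eq0 r s R m w1 i1 w2 i2 \<Longrightarrow> eq0 r s R m w2 i2 w1 i1"
proof -
  assume h: "eq0 r s R m w1 i1 w2 i2"
  hence l: "w2 ! i2 = w1 ! i1" unfolding eq0_def by simp
  from h consider (shared) k p1 p2 u where "(k, p1, u) \<in> nbhds r s R m w1" "(k, p2, u) \<in> nbhds r s R m w2"
     "in_nb i1 (p1, u)" "in_nb i2 (p2, u)" "i1 - p1 = i2 - p2"
   | (outside) "\<forall>k p u. (k, p, u) \<in> nbhds r s R m w1 \<longrightarrow> \<not> in_nb i1 (p, u)"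
       "\<forall>k p u. (k, p, u) \<in> nbhds r s R m w2 \<longrightarrow> \<not> in_nb i2 (p, u)"
    unfolding eq0_def by blast
  thus ?thesis
  proof cases
    case shared
    thus ?thesis unfolding eq0_def using l
      by (intro conjI disjI1 exI[of _ k] exI[of _ p2] exI[of _ p1] exI[of _ u]) auto
  next
    case outside
    thus ?thesis unfolding eq0_def using l by (intro conjI disjI2) auto
  qed
qed

lemma eq0_sym: "eq0 r s R m w1 i1 w2 i2 = eq0 r s R m w2 i2 w1 i1"
  using eq0_sym_imp by blast

lemma eq0_shared_nbhdI:
  assumes "w1 ! i1 = w2 ! i2" "(kd, p1, u) \<in> nbhds r s R m w1" "(kd, p2, u) \<in> nbhds r s R m w2"
    "in_nb i1 (p1, u)" "in_nb i2 (p2, u)" "i1 - p1 = i2 - p2"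
  shows "eq0 r s R m w1 i1 w2 i2"
  using assms unfolding eq0_def by blast

lemma eq0_outside_nbhdsI:
  assumes "w1 ! i1 = w2 ! i2"
    "\<forall>kd p u. (kd, p, u) \<in> nbhds r s R m w1 \<longrightarrow> \<not> in_nb i1 (p, u)"
    "\<forall>kd p u. (kd, p, u) \<in> nbhds r s R m w2 \<longrightarrow> \<not> in_nb i2 (p, u)"
  shows "eq0 r s R m w1 i1 w2 i2"
  using assms unfolding eq0_def by blast

lemma wins_sym: "wins r s R m n w1 i1 w2 i2 = wins r s R m n w2 i2 w1 i1"
proof (induction n arbitrary: i1 i2)
  case (Suc n)
  have "\<And>a b. eq0 r s R m w2 a w1 b = eq0 r s R m w1 b w2 a" by (rule eq0_sym)
  moreover have "\<And>a b. wins r s R m n w2 a w1 b = wins r s R m n w1 b w2 a" using Suc.IH by simp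
  ultimately show ?case unfolding wins.simps by blast
qed simp

lemma jumped_commute: "jumped w i j = jumped w j i"
  by (simp add: jumped_def min.commute max.commute)

lemma jumped_offset_image:
  "jumped w (B + t) (B + t1) =
    (\<lambda>d. w ! (B + d)) ` {d. min t t1 < d \<and> d < max t t1}"
proof -
  have e: "{l. min (B + t) (B + t1) < l \<and> l < max (B + t) (B + t1)} =
      (\<lambda>d. B + d) ` {d. min t t1 < d \<and> d < max t t1}"
  proof (rule set_eqI, rule iffI)
    fix l assume "l \<in> {l. min (B + t) (B + t1) < l \<and> l < max (B + t) (B + t1)}"
    hence l: "min (B + t) (B + t1) < l" "l < max (B + t) (B + t1)" by auto
    show "l \<in> (\<lambda>d. B + d) ` {d. min t t1 < d \<and> d < max t t1}"
      by (rule image_eqI[of _ _ "l - B"]) (use l in \<open>auto simp: min_def max_def split: if_splits\<close>)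
  qed (auto simp: min_def max_def)
  have "jumped w (B + t) (B + t1) = (\<lambda>l. w ! l) ` {l. min (B + t) (B + t1) < l \<and> l < max (B + t) (B + t1)}"
    unfolding jumped_def by blast
  thus ?thesis unfolding e image_image .
qed

lemma jumped_shift:
  assumes "\<forall>d < M. w ! (B + d) = w' ! (B' + d)" "t < M" "t1 < M"
  shows "jumped w (B + t) (B + t1) = jumped w' (B' + t) (B' + t1)"
  unfolding jumped_offset_image using assms by (intro image_cong) auto

section \<open>Words built from blocks\<close>

datatype block = Bv | Ba | Bb

definition block_word :: "nat \<Rightarrow> nat \<Rightarrow> block \<Rightarrow> letter list" where
  "block_word r s x = (case x of Bv \<Rightarrow> vword r s | Ba \<Rightarrow> boldA r | Bb \<Rightarrow> boldB s)"

definition blocks_word :: "nat \<Rightarrow> nat \<Rightarrow> block list \<Rightarrow> letter list" where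
  "blocks_word r s U = concat (map (block_word r s) U)"

definition block_pos :: "nat \<Rightarrow> nat \<Rightarrow> block list \<Rightarrow> nat \<Rightarrow> nat" where
  "block_pos r s U j = length (blocks_word r s (take j U))"

lemma blocks_word_append[simp]: "blocks_word r s (A @ B) = blocks_word r s A @ blocks_word r s B"
  by (simp add: blocks_word_def)
lemma blocks_word_Cons[simp]: "blocks_word r s (x # B) = block_word r s x @ blocks_word r s B"
  by (simp add: blocks_word_def)
lemma blocks_word_Nil[simp]: "blocks_word r s [] = []"
  by (simp add: blocks_word_def)

lemma blocks_word_replicate_Bv: "blocks_word r s (replicate n Bv) = wpow (vword r s) n"
  by (induction n) (auto simp: wpow_def block_word_def)

locale block_words = fixes r s :: nat
begin

lemma set_boldA_subset: "set (boldA r) \<subseteq> set (vword r s)"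
  by (auto simp: boldA_def vword_def)
lemma set_boldB_subset: "set (boldB s) \<subseteq> set (vword r s)"
  by (auto simp: boldB_def vword_def)

lemma set_block_word_subset: "set (block_word r s x) \<subseteq> set (vword r s)"
  using set_boldA_subset set_boldB_subset by (cases x) (auto simp: block_word_def)

lemma set_blocks_word_subset: "set (blocks_word r s U) \<subseteq> set (vword r s)"
  using set_block_word_subset by (auto simp: blocks_word_def)

lemma blocks_word_take_drop: "blocks_word r s U = blocks_word r s (take j U) @ blocks_word r s (drop j U)"
  by (metis blocks_word_append append_take_drop_id)

lemma block_pos_0 [simp]: "block_pos r s U 0 = 0" by (simp add: block_pos_def)

lemma length_blocks_word: "length (blocks_word r s U) = block_pos r s U (length U)"
  by (simp add: block_pos_def)

lemma block_pos_Suc: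
  "j < length U \<Longrightarrow> block_pos r s U (Suc j) = block_pos r s U j + length (block_word r s (U ! j))"
  by (simp add: block_pos_def take_Suc_conv_app_nth)

lemma block_pos_add:
  "block_pos r s U (j + l) = block_pos r s U j + length (blocks_word r s (take l (drop j U)))"
  by (simp add: block_pos_def take_add)

lemma block_pos_mono: "j \<le> j' \<Longrightarrow> block_pos r s U j \<le> block_pos r s U j'"
  using block_pos_add[of U j "j' - j"] by simp

lemma block_pos_Suc_le:
  assumes "j < length U" "j < j'"
  shows "block_pos r s U j + length (block_word r s (U ! j)) \<le> block_pos r s U j'"
  using block_pos_Suc[of j U] block_pos_mono[of "Suc j" j' U] assms by simp

lemma blocks_word_nth: "j < length U \<Longrightarrow> o' < length (block_word r s (U ! j)) \<Longrightarrow>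
   blocks_word r s U ! (block_pos r s U j + o') = block_word r s (U ! j) ! o'"
proof -
  assume a: "j < length U" "o' < length (block_word r s (U ! j))"
  have "U = take j U @ U ! j # drop (Suc j) U" using a by (simp add: id_take_nth_drop)
  hence "blocks_word r s U =
      blocks_word r s (take j U) @ block_word r s (U ! j) @ blocks_word r s (drop (Suc j) U)"
    by (metis blocks_word_Cons blocks_word_append)
  thus ?thesis using a by (simp add: block_pos_def nth_append)
qed

lemma blocks_word_index_cases:
  "q < length (blocks_word r s U) \<Longrightarrow>
    \<exists>j o'. j < length U \<and> o' < length (block_word r s (U ! j)) \<and> q = block_pos r s U j + o'"
proof (induction U arbitrary: q)
  case Nil thus ?case by simp
next
  case (Cons x U)
  show ?case
  proof (cases "q < length (block_word r s x)")
    case True thus ?thesis by (intro exI[of _ 0] exI[of _ q]) (simp add: block_pos_def)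
  next
    case False
    have "q - length (block_word r s x) < length (blocks_word r s U)" using Cons.prems False by simp
    then obtain j o' where "j < length U" "o' < length (block_word r s (U ! j))"
      "q - length (block_word r s x) = block_pos r s U j + o'" using Cons.IH by blast
    thus ?thesis using False
      by (intro exI[of _ "Suc j"] exI[of _ o']) (simp add: block_pos_def)
  qed
qed

lemma block_pos_add_less_length:
  "j < length U \<Longrightarrow> o' < length (block_word r s (U ! j)) \<Longrightarrow>
    block_pos r s U j + o' < length (blocks_word r s U)"
  using block_pos_Suc[of j U] block_pos_mono[of "Suc j" "length U" U] length_blocks_word[of U] by simp

lemma block_pos_add_less_iff:
  assumes "j < length U" "o1 < length (block_word r s (U ! j))" "j' < length U"
    "o2 < length (block_word r s (U ! j'))"
  shows "block_pos r s U j + o1 < block_pos r s U j' + o2 \<longleftrightarrow> (j < j' \<or> (j = j' \<and> o1 < o2))"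
proof -
  have "j < j' \<Longrightarrow> block_pos r s U j + o1 < block_pos r s U j' + o2"
    using block_pos_Suc_le[of j U j'] assms by simp
  moreover have "j' < j \<Longrightarrow> block_pos r s U j' + o2 < block_pos r s U j + o1"
    using block_pos_Suc_le[of j' U j] assms by simp
  ultimately show ?thesis by (cases j j' rule: linorder_cases) auto
qed

lemma block_pos_diff_eq_if_take_eq:
  assumes "take c (drop x1 U) = take c (drop x2 U')" "l \<le> c"
  shows "block_pos r s U (x1 + l) - block_pos r s U x1 = block_pos r s U' (x2 + l) - block_pos r s U' x2"
proof -
  have "take l (drop x1 U) = take l (drop x2 U')"
    using assms by (metis min.absorb1 take_take)
  thus ?thesis by (simp add: block_pos_add)
qed

lemma blocks_word_nth_eq_if_take_eq:
  assumes "take c (drop x1 U) = take c (drop x2 U')"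
  shows "\<forall>d < block_pos r s U (x1 + c) - block_pos r s U x1.
    blocks_word r s U ! (block_pos r s U x1 + d) = blocks_word r s U' ! (block_pos r s U' x2 + d)"
proof (intro allI impI)
  fix d assume d: "d < block_pos r s U (x1 + c) - block_pos r s U x1"
  let ?L = "blocks_word r s (take c (drop x1 U))"
  have dL: "d < length ?L" using d by (simp add: block_pos_add)
  have "blocks_word r s U ! (block_pos r s U x1 + d) = blocks_word r s (drop x1 U) ! d"
    using blocks_word_take_drop[of U x1] by (simp add: block_pos_def nth_append)
  also have "\<dots> = ?L ! d"
    using blocks_word_take_drop[of "drop x1 U" c] dL by (metis nth_append)
  also have "\<dots> = blocks_word r s (drop x2 U') ! d"
    using blocks_word_take_drop[of "drop x2 U'" c] dL assms by (metis nth_append)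
  also have "\<dots> = blocks_word r s U' ! (block_pos r s U' x2 + d)"
    using blocks_word_take_drop[of U' x2] by (simp add: block_pos_def nth_append)
  finally show "blocks_word r s U ! (block_pos r s U x1 + d) =
      blocks_word r s U' ! (block_pos r s U' x2 + d)" .
qed

lemma jumped_across_Bv:
  assumes "j < l" "l < j'" "j' < length U" "U ! l = Bv"
    "o1 < length (block_word r s (U ! j))" "o2 < length (block_word r s (U ! j'))"
  shows "jumped (blocks_word r s U) (block_pos r s U j + o1) (block_pos r s U j' + o2) = set (vword r s)"
proof
  have lt: "block_pos r s U j + o1 < block_pos r s U j' + o2" using block_pos_add_less_iff assms by auto
  show "jumped (blocks_word r s U) (block_pos r s U j + o1) (block_pos r s U j' + o2) \<subseteq> set (vword r s)"
  proof
    fix y assume "y \<in> jumped (blocks_word r s U) (block_pos r s U j + o1) (block_pos r s U j' + o2)"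
    then obtain i where "y = blocks_word r s U ! i" "i < block_pos r s U j' + o2"
      using lt by (auto simp: jumped_def)
    moreover have "block_pos r s U j' + o2 < length (blocks_word r s U)"
      using block_pos_add_less_length assms by simp
    ultimately show "y \<in> set (vword r s)"
      using set_blocks_word_subset by (meson nth_mem order.strict_trans subsetD)
  qed
  show "set (vword r s) \<subseteq> jumped (blocks_word r s U) (block_pos r s U j + o1) (block_pos r s U j' + o2)"
  proof
    fix y assume "y \<in> set (vword r s)"
    then obtain t where t: "t < length (vword r s)" "y = vword r s ! t" by (metis in_set_conv_nth)
    have em: "block_word r s (U ! l) = vword r s" using assms by (simp add: block_word_def)
    have l1: "block_pos r s U j + o1 < block_pos r s U l + t"
      using block_pos_add_less_iff[of j U o1 l t] assms t em by simp
    have l2: "block_pos r s U l + t < block_pos r s U j' + o2"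
      using block_pos_add_less_iff[of l U t j' o2] assms t em by simp
    have "blocks_word r s U ! (block_pos r s U l + t) = y"
      using blocks_word_nth[of l U t] assms t em by simp
    thus "y \<in> jumped (blocks_word r s U) (block_pos r s U j + o1) (block_pos r s U j' + o2)"
      using l1 l2 unfolding jumped_def by (intro CollectI exI[of _ "block_pos r s U l + t"]) simp
  qed
qed

lemma length_wpow_vword: "length (wpow (vword r s) m) = m * length (vword r s)"
  by (induction m) (auto simp: wpow_def)

lemma block_pos_run_Bv:
  assumes "x + c \<le> length U" "\<forall>t<c. U ! (x + t) = Bv"
  shows "block_pos r s U (x + c) = block_pos r s U x + c * length (vword r s)"
proof -
  have "take c (drop x U) = replicate c Bv"
    using assms by (intro nth_equalityI) auto
  thus ?thesis by (simp add: block_pos_add blocks_word_replicate_Bv length_wpow_vword)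
qed

end

section \<open>Factorizations\<close>

definition block_nbhds :: "nat \<Rightarrow> nat \<Rightarrow> nat \<Rightarrow> block list \<Rightarrow> (nkind \<times> nat \<times> letter list) set" where
  "block_nbhds r s m U =
    (let vm = wpow (vword r s) m in
     {(NPre, 0, vm), (NSuf, length (blocks_word r s U) - length vm, vm)} \<union>
     {(NMid, block_pos r s U j - length vm, vm @ block_word r s (U ! j) @ vm) | j. j < length U \<and> U ! j \<noteq> Bv})"

datatype factor = Fv | Fa | Fb

definition factor_word :: "nat \<Rightarrow> nat \<Rightarrow> nat \<Rightarrow> factor \<Rightarrow> letter list" where
  "factor_word r s S x = (case x of Fv \<Rightarrow> wpow (vword r s) S | Fa \<Rightarrow> boldA r | Fb \<Rightarrow> boldB s)"

definition expand_factor :: "nat \<Rightarrow> factor \<Rightarrow> block list" where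
  "expand_factor S x = (case x of Fv \<Rightarrow> replicate S Bv | Fa \<Rightarrow> [Ba] | Fb \<Rightarrow> [Bb])"

definition expand_factors :: "nat \<Rightarrow> factor list \<Rightarrow> block list" where
  "expand_factors S fl = concat (map (expand_factor S) fl)"

lemma blocks_word_expand_factor: "blocks_word r s (expand_factor S x) = factor_word r s S x"
  by (cases x) (auto simp: expand_factor_def factor_word_def blocks_word_replicate_Bv block_word_def)

lemma blocks_word_expand_factors:
  "blocks_word r s (expand_factors S fl) = concat (map (factor_word r s S) fl)"
  by (induction fl) (auto simp: expand_factors_def blocks_word_expand_factor)

lemma expand_factors_Nil[simp]: "expand_factors S [] = []"
  by (simp add: expand_factors_def)
lemma expand_factors_Cons[simp]: "expand_factors S (x # fl) = expand_factor S x @ expand_factors S fl"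
  by (simp add: expand_factors_def)

definition v_alternating :: "factor list \<Rightarrow> bool" where
  "v_alternating fl \<longleftrightarrow> (\<forall>q. Suc q < length fl \<longrightarrow> fl ! q = Fv \<or> fl ! Suc q = Fv)"

lemma v_alternating_append:
  assumes "v_alternating xs" "v_alternating ys" "xs \<noteq> []" "ys \<noteq> []" "last xs = Fv \<or> hd ys = Fv"
  shows "v_alternating (xs @ ys)"
  unfolding v_alternating_def
proof (intro allI impI)
  fix q assume q: "Suc q < length (xs @ ys)"
  consider "Suc q < length xs" | "Suc q = length xs" | "q \<ge> length xs" by linarith
  thus "(xs @ ys) ! q = Fv \<or> (xs @ ys) ! Suc q = Fv"
  proof cases
    case 1 thus ?thesis using assms(1) by (simp add: v_alternating_def nth_append)
  next
    case 2
    have "q = length xs - 1" using 2 by simp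
    hence "xs ! q = last xs" using assms(3) by (simp add: last_conv_nth)
    moreover have "ys ! 0 = hd ys" using assms(4) by (simp add: hd_conv_nth)
    ultimately show ?thesis using 2 assms(5) by (simp add: nth_append)
  next
    case 3
    have "Suc (q - length xs) < length ys" using q 3 by simp
    hence "ys ! (q - length xs) = Fv \<or> ys ! Suc (q - length xs) = Fv"
      using assms(2) by (simp add: v_alternating_def)
    moreover have "Suc q - length xs = Suc (q - length xs)" using 3 by simp
    ultimately show ?thesis using 3 by (simp add: nth_append)
  qed
qed

locale nonempty_ab = block_words + assumes r1: "r \<ge> 1" and s1: "s \<ge> 1"
begin

lemma vword_ne: "vword r s \<noteq> []"
  using r1 by (simp add: vword_def upt_conv_Cons del: upt_Suc)

lemma hd_vword: "hd (vword r s) = LC 1"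
  using r1 by (simp add: vword_def upt_conv_Cons del: upt_Suc)

lemma boldA_ne: "boldA r \<noteq> []" using r1 by (simp add: boldA_def)
lemma boldB_ne: "boldB s \<noteq> []" using s1 by (simp add: boldB_def)
lemma hd_boldA: "hd (boldA r) = LA 1" using r1 by (simp add: boldA_def upt_conv_Cons del: upt_Suc)
lemma hd_boldB: "hd (boldB s) = LB 1" using s1 by (simp add: boldB_def upt_conv_Cons del: upt_Suc)

lemma hd_wpow_vword: "S \<ge> 1 \<Longrightarrow> hd (wpow (vword r s) S) = LC 1"
  using hd_vword vword_ne by (cases S) (auto simp: wpow_def)

lemma wpow_vword_ne: "S \<ge> 1 \<Longrightarrow> wpow (vword r s) S \<noteq> []"
  using vword_ne by (cases S) (auto simp: wpow_def)

lemma hd_factor_word: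
  "S \<ge> 1 \<Longrightarrow> hd (factor_word r s S x) = (case x of Fv \<Rightarrow> LC 1 | Fa \<Rightarrow> LA 1 | Fb \<Rightarrow> LB 1)"
  using hd_wpow_vword hd_boldA hd_boldB by (cases x) (auto simp: factor_word_def)

lemma factor_word_eq_iff: "S \<ge> 1 \<Longrightarrow> factor_word r s S x = factor_word r s S y \<longleftrightarrow> x = y"
proof
  assume "S \<ge> 1" "factor_word r s S x = factor_word r s S y"
  hence "(case x of Fv \<Rightarrow> LC 1 | Fa \<Rightarrow> LA 1 | Fb \<Rightarrow> LB 1) =
      (case y of Fv \<Rightarrow> LC 1 | Fa \<Rightarrow> LA 1 | Fb \<Rightarrow> LB 1)"
    using hd_factor_word by metis
  thus "x = y" by (cases x; cases y) auto
qed simp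

lemma factorization_unique:
  assumes S: "S \<ge> 1"
  shows "set fs1 \<subseteq> {boldA r, boldB s, wpow (vword r s) S} \<Longrightarrow>
    set fs2 \<subseteq> {boldA r, boldB s, wpow (vword r s) S} \<Longrightarrow> concat fs1 = concat fs2 \<Longrightarrow> fs1 = fs2"
proof (induction fs1 arbitrary: fs2)
  case Nil
  thus ?case using boldA_ne boldB_ne wpow_vword_ne[OF S] by (cases fs2) auto
next
  case (Cons x fs1)
  show ?case
  proof (cases "fs2 = []")
    case True thus ?thesis using Cons.prems boldA_ne boldB_ne wpow_vword_ne[OF S] by auto
  next
    case False
    then obtain y fs2' where Cons2: "fs2 = y # fs2'" by (meson neq_Nil_conv)
    have xne: "x \<noteq> []" "y \<noteq> []" using Cons.prems Cons2 boldA_ne boldB_ne wpow_vword_ne[OF S] by auto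
    have "hd (x @ concat fs1) = hd (y @ concat fs2')" using Cons.prems Cons2 by simp
    hence "hd x = hd y" using xne by simp
    hence xy: "x = y" using Cons.prems Cons2 hd_boldA hd_boldB hd_wpow_vword[OF S] by auto
    hence "concat fs1 = concat fs2'" using Cons.prems Cons2 by simp
    thus ?thesis using Cons.IH Cons.prems Cons2 xy by auto
  qed
qed

lemma Rfact_map_factor_word:
  assumes S: "S \<ge> 1" and fl: "fl \<noteq> []" "hd fl = Fv" "last fl = Fv" "v_alternating fl"
  shows "Rfact r s S (map (factor_word r s S) fl)"
proof -
  have e: "\<And>x. factor_word r s S x = wpow (vword r s) S \<longleftrightarrow> x = Fv"
    using factor_word_eq_iff[OF S, of _ Fv] by (simp add: factor_word_def)
  show ?thesis unfolding Rfact_def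
    using fl e by (auto simp: hd_map last_map factor_word_def v_alternating_def split: factor.splits)
qed

lemma the_fact_expand_factors:
  assumes S: "S \<ge> 1" and fl: "fl \<noteq> []" "hd fl = Fv" "last fl = Fv" "v_alternating fl"
  shows "the_fact r s S (blocks_word r s (expand_factors S fl)) = map (factor_word r s S) fl"
  unfolding the_fact_def
proof (rule the_equality)
  show "Rfact r s S (map (factor_word r s S) fl) \<and> concat (map (factor_word r s S) fl) =
      blocks_word r s (expand_factors S fl)"
    using Rfact_map_factor_word[OF assms] blocks_word_expand_factors by simp
  fix fs assume "Rfact r s S fs \<and> concat fs = blocks_word r s (expand_factors S fl)"
  moreover have "set (map (factor_word r s S) fl) \<subseteq> {boldA r, boldB s, wpow (vword r s) S}"
    by (auto simp: factor_word_def split: factor.splits)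
  ultimately show "fs = map (factor_word r s S) fl"
    using factorization_unique[OF S, of fs "map (factor_word r s S) fl"] blocks_word_expand_factors
    by (auto simp: Rfact_def)
qed

definition factor_marks :: "nat \<Rightarrow> factor list \<Rightarrow> (nat \<times> letter list) set" where
  "factor_marks S fl = {(length (concat (take q (map (factor_word r s S) fl))), factor_word r s S (fl ! q)) | q.
     q < length fl \<and> fl ! q \<noteq> Fv}"

definition block_marks :: "block list \<Rightarrow> (nat \<times> letter list) set" where
  "block_marks U = {(block_pos r s U j, block_word r s (U ! j)) | j. j < length U \<and> U ! j \<noteq> Bv}"

lemma factor_marks_Cons_iff:
  "(p, f) \<in> factor_marks S (x # fl) \<longleftrightarrow>
    (x \<noteq> Fv \<and> p = 0 \<and> f = factor_word r s S x) \<or>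
    (length (factor_word r s S x) \<le> p \<and> (p - length (factor_word r s S x), f) \<in> factor_marks S fl)"
proof
  assume "(p, f) \<in> factor_marks S (x # fl)"
  then obtain q where q: "q < length (x # fl)" "(x # fl) ! q \<noteq> Fv"
    "p = length (concat (take q (map (factor_word r s S) (x # fl))))" "f = factor_word r s S ((x # fl) ! q)"
    by (auto simp: factor_marks_def)
  show "(x \<noteq> Fv \<and> p = 0 \<and> f = factor_word r s S x) \<or>
      (length (factor_word r s S x) \<le> p \<and> (p - length (factor_word r s S x), f) \<in> factor_marks S fl)"
  proof (cases q)
    case 0 thus ?thesis using q by simp
  next
    case (Suc q')
    thus ?thesis using q unfolding factor_marks_def by auto
  qed
next
  assume "(x \<noteq> Fv \<and> p = 0 \<and> f = factor_word r s S x) \<or>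
      (length (factor_word r s S x) \<le> p \<and> (p - length (factor_word r s S x), f) \<in> factor_marks S fl)"
  thus "(p, f) \<in> factor_marks S (x # fl)"
  proof
    assume "x \<noteq> Fv \<and> p = 0 \<and> f = factor_word r s S x"
    thus ?thesis unfolding factor_marks_def by (intro CollectI exI[of _ 0]) auto
  next
    assume a: "length (factor_word r s S x) \<le> p \<and> (p - length (factor_word r s S x), f) \<in> factor_marks S fl"
    then obtain q where q: "q < length fl" "fl ! q \<noteq> Fv"
      "p - length (factor_word r s S x) = length (concat (take q (map (factor_word r s S) fl)))"
      "f = factor_word r s S (fl ! q)"
      by (auto simp: factor_marks_def)
    show ?thesis unfolding factor_marks_def using a q by (intro CollectI exI[of _ "Suc q"]) auto
  qed
qed

lemma block_marks_append_iff:
  "(p, f) \<in> block_marks (A @ B) \<longleftrightarrow>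
    (p, f) \<in> block_marks A \<or>
    (length (blocks_word r s A) \<le> p \<and> (p - length (blocks_word r s A), f) \<in> block_marks B)"
proof
  assume "(p, f) \<in> block_marks (A @ B)"
  then obtain j where j: "j < length (A @ B)" "(A @ B) ! j \<noteq> Bv" "p = block_pos r s (A @ B) j"
    "f = block_word r s ((A @ B) ! j)"
    by (auto simp: block_marks_def)
  show "(p, f) \<in> block_marks A \<or>
      (length (blocks_word r s A) \<le> p \<and> (p - length (blocks_word r s A), f) \<in> block_marks B)"
  proof (cases "j < length A")
    case True
    thus ?thesis using j unfolding block_marks_def by (auto simp: block_pos_def nth_append)
  next
    case False
    hence "block_pos r s (A @ B) j = length (blocks_word r s A) + block_pos r s B (j - length A)"
      by (simp add: block_pos_def)
    thus ?thesis using j False unfolding block_marks_def by (auto simp: nth_append)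
  qed
next
  assume "(p, f) \<in> block_marks A \<or>
      (length (blocks_word r s A) \<le> p \<and> (p - length (blocks_word r s A), f) \<in> block_marks B)"
  thus "(p, f) \<in> block_marks (A @ B)"
  proof
    assume "(p, f) \<in> block_marks A"
    then obtain j where j: "j < length A" "A ! j \<noteq> Bv" "p = block_pos r s A j" "f = block_word r s (A ! j)"
      by (auto simp: block_marks_def)
    show ?thesis unfolding block_marks_def using j
      by (intro CollectI exI[of _ j]) (auto simp: block_pos_def nth_append)
  next
    assume a: "length (blocks_word r s A) \<le> p \<and> (p - length (blocks_word r s A), f) \<in> block_marks B"
    then obtain j where j: "j < length B" "B ! j \<noteq> Bv"
      "p - length (blocks_word r s A) = block_pos r s B j" "f = block_word r s (B ! j)"
      by (auto simp: block_marks_def)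
    have "block_pos r s (A @ B) (length A + j) = length (blocks_word r s A) + block_pos r s B j"
      by (simp add: block_pos_def)
    thus ?thesis unfolding block_marks_def using j a
      by (intro CollectI exI[of _ "length A + j"]) (auto simp: nth_append)
  qed
qed

lemma block_marks_expand_factor_iff:
  "(p, f) \<in> block_marks (expand_factor S x) \<longleftrightarrow> x \<noteq> Fv \<and> p = 0 \<and> f = factor_word r s S x"
  by (cases x) (auto simp: block_marks_def expand_factor_def factor_word_def block_word_def block_pos_def)

lemma factor_marks_iff_block_marks:
  "(p, f) \<in> factor_marks S fl \<longleftrightarrow> (p, f) \<in> block_marks (expand_factors S fl)"
proof (induction fl arbitrary: p)
  case Nil thus ?case by (simp add: factor_marks_def block_marks_def)
next
  case (Cons x fl)
  show ?case
    unfolding factor_marks_Cons_iff expand_factors_Cons block_marks_append_iff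
      block_marks_expand_factor_iff blocks_word_expand_factor Cons.IH by simp
qed

lemma nbhds_expand_factors:
  assumes S: "S \<ge> 1" and fl: "fl \<noteq> []" "hd fl = Fv" "last fl = Fv" "v_alternating fl"
  shows "nbhds r s S m (blocks_word r s (expand_factors S fl)) = block_nbhds r s m (expand_factors S fl)"
proof -
  let ?vm = "wpow (vword r s) m" and ?fs = "map (factor_word r s S) fl" and ?U = "expand_factors S fl"
  have tf: "the_fact r s S (blocks_word r s ?U) = ?fs"
    using the_fact_expand_factors[OF assms] .
  have c: "\<And>q. q < length fl \<Longrightarrow> (?fs ! q = boldA r \<or> ?fs ! q = boldB s) \<longleftrightarrow> fl ! q \<noteq> Fv"
  proof -
    have "wpow (vword r s) S \<noteq> boldA r" "wpow (vword r s) S \<noteq> boldB s" "boldA r \<noteq> boldB s"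
      using factor_word_eq_iff[OF S, of Fv Fa] factor_word_eq_iff[OF S, of Fv Fb]
        factor_word_eq_iff[OF S, of Fa Fb] by (auto simp: factor_word_def)
    thus "\<And>q. q < length fl \<Longrightarrow> (?fs ! q = boldA r \<or> ?fs ! q = boldB s) \<longleftrightarrow> fl ! q \<noteq> Fv"
      by (auto simp: factor_word_def split: factor.splits)
  qed
  have M: "{(NMid, length (concat (take q ?fs)) - length ?vm, ?vm @ ?fs ! q @ ?vm) | q.
          q < length ?fs \<and> (?fs ! q = boldA r \<or> ?fs ! q = boldB s)}
        = (\<lambda>(p, f). (NMid, p - length ?vm, ?vm @ f @ ?vm)) ` factor_marks S fl"
  proof -
    let ?Q = "{q. q < length fl \<and> fl ! q \<noteq> Fv}"
    have e1: "factor_marks S fl = (\<lambda>q. (length (concat (take q ?fs)), factor_word r s S (fl ! q))) ` ?Q"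
      unfolding factor_marks_def by blast
    have e2: "{(NMid, length (concat (take q ?fs)) - length ?vm, ?vm @ ?fs ! q @ ?vm) | q.
          q < length ?fs \<and> (?fs ! q = boldA r \<or> ?fs ! q = boldB s)}
        = (\<lambda>q. (NMid, length (concat (take q ?fs)) - length ?vm, ?vm @ ?fs ! q @ ?vm)) ` ?Q"
    proof -
      have "{q. q < length ?fs \<and> (?fs ! q = boldA r \<or> ?fs ! q = boldB s)} = ?Q"
        using c by (metis (no_types, lifting) length_map nth_map)
      thus ?thesis by blast
    qed
    show ?thesis unfolding e1 e2 image_image by (intro image_cong) auto
  qed
  have N: "{(NMid, block_pos r s ?U j - length ?vm, ?vm @ block_word r s (?U ! j) @ ?vm) | j.
       j < length ?U \<and> ?U ! j \<noteq> Bv}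
     = (\<lambda>(p, f). (NMid, p - length ?vm, ?vm @ f @ ?vm)) ` block_marks ?U"
    unfolding block_marks_def by auto
  have FU: "factor_marks S fl = block_marks ?U" using factor_marks_iff_block_marks by auto
  show ?thesis unfolding nbhds_def block_nbhds_def tf Let_def M N FU by simp
qed

end

section \<open>Windows and regular block words\<close>

(* A move by at most two blocks is copied exactly, so each round uses up 2 of the radius on which
   the surroundings of the pebbles agree; radius 2m+2 is what the last round needs. *)
definition radius :: "nat \<Rightarrow> nat \<Rightarrow> nat" where
  "radius m n = 2 * m + 2 + 2 * n"

definition period :: "nat \<Rightarrow> nat" where
  "period S = 3 * S + 2"

(* Each round the margin drops by enough to fit three periods, in which a block of any phase can be
   found, next to a window of maximal radius. *)
definition margin :: "nat \<Rightarrow> nat \<Rightarrow> nat \<Rightarrow> nat \<Rightarrow> nat" where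
  "margin S m k n = (n + 1) * (3 * period S + radius m k + 4)"

definition period_block :: "nat \<Rightarrow> nat \<Rightarrow> block" where
  "period_block S i = (if i = S then Ba else if i = 2 * S + 1 then Bb else Bv)"

definition window :: "nat \<Rightarrow> block list \<Rightarrow> nat \<Rightarrow> int \<Rightarrow> block option" where
  "window D U j = (\<lambda>l. if \<bar>l\<bar> \<le> int D \<and> 0 \<le> int j + l \<and> int j + l < int (length U)
      then Some (U ! nat (int j + l)) else None)"

definition periodic_window :: "nat \<Rightarrow> nat \<Rightarrow> nat \<Rightarrow> int \<Rightarrow> block option" where
  "periodic_window S D \<rho> =
      (\<lambda>l. if \<bar>l\<bar> \<le> int D then Some (period_block S (nat ((int \<rho> + l) mod int (period S)))) else None)"

(* Every window looks like a window of the periodic word (v^S a v^S b v^S)^\<omega>, every phase of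
   which occurs in each stretch of three periods; the last clause ties the blocks to the
   m-neighbourhoods of the R-word they spell. *)
definition regular_word :: "nat \<Rightarrow> nat \<Rightarrow> nat \<Rightarrow> nat \<Rightarrow> nat \<Rightarrow> block list \<Rightarrow> bool" where
  "regular_word r s S m k U \<longleftrightarrow>
    2 * margin S m k k + 3 * period S + 2 \<le> length U \<and>
    (\<forall>i<S. U ! i = Bv) \<and> (\<forall>i<S. U ! (length U - Suc i) = Bv) \<and>
    (\<forall>i i'. i < i' \<longrightarrow> i' < length U \<longrightarrow> U ! i \<noteq> Bv \<longrightarrow> U ! i' \<noteq> Bv \<longrightarrow> S < i' - i) \<and>
    (\<forall>D j. D \<le> radius m k \<longrightarrow> D \<le> j \<longrightarrow> j + D < length U \<longrightarrow>
        (\<exists>\<rho> < period S. window D U j = periodic_window S D \<rho>)) \<and>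
    (\<forall>D x \<rho>. D \<le> radius m k \<longrightarrow> \<rho> < period S \<longrightarrow> D \<le> x \<longrightarrow> x + 3 * period S + D < length U \<longrightarrow>
        (\<exists>j. x \<le> j \<and> j \<le> x + 3 * period S \<and> window D U j = periodic_window S D \<rho>)) \<and>
    nbhds r s S m (blocks_word r s U) = block_nbhds r s m U"

lemma window_eq_nth:
  assumes "window D U j = window D U' j'" "\<bar>d\<bar> \<le> int D" "0 \<le> int j + d" "int j + d < int (length U)"
  shows "0 \<le> int j' + d \<and> int j' + d < int (length U') \<and> U ! nat (int j + d) = U' ! nat (int j' + d)"
  using fun_cong[OF assms(1), of d] assms(2-4) by (simp add: window_def split: if_splits)

lemma window_eq_center:
  assumes "window D U j = window D U' j'" "j < length U"
  shows "j' < length U' \<and> U ! j = U' ! j'"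
  using window_eq_nth[OF assms(1), of 0] assms(2) by simp

lemma window_eq_shift:
  assumes "window D U j = window D U' j'" "\<bar>d\<bar> + int D' \<le> int D" "0 \<le> int j + d"
    "int j + d < int (length U)"
  shows "window D' U (nat (int j + d)) = window D' U' (nat (int j' + d))"
proof
  fix l
  have h: "window D U j (d + l) = window D U' j' (d + l)" using assms(1) by simp
  have r: "0 \<le> int j' + d" using window_eq_nth[OF assms(1), of d] assms(2-4) by simp
  show "window D' U (nat (int j + d)) l = window D' U' (nat (int j' + d)) l"
  proof (cases "\<bar>l\<bar> \<le> int D'")
    case True
    hence "\<bar>d + l\<bar> \<le> int D" using assms(2) by simp
    thus ?thesis using h True assms(3) r by (auto simp: window_def add.assoc split: if_splits)
  next
    case False thus ?thesis by (simp add: window_def)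
  qed
qed

lemma window_eq_nth_nat:
  assumes "window D U j = window D U' j'" "i < length U" "i \<le> j + D" "j \<le> i + D"
  shows "j \<le> j' + i \<and> j' + i - j < length U' \<and> U ! i = U' ! (j' + i - j)"
proof -
  have "\<bar>int i - int j\<bar> \<le> int D" "0 \<le> int j + (int i - int j)" "int j + (int i - int j) < int (length U)"
    using assms by linarith+
  from window_eq_nth[OF assms(1) this]
  have h: "0 \<le> int j' + (int i - int j)" "int j' + (int i - int j) < int (length U')"
    "U ! nat (int j + (int i - int j)) = U' ! nat (int j' + (int i - int j))" by auto
  have a: "j \<le> j' + i" using h(1) by linarith
  hence "int j' + (int i - int j) = int (j' + i - j)" by simp
  hence "nat (int j' + (int i - int j)) = j' + i - j" by simp
  thus ?thesis using h a by simp
qed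

lemma window_eq_take_eq:
  assumes w: "window D U j = window D U' j'" and "x \<le> j" "j < x + c" "j \<le> x + D" "x + c \<le> Suc (j + D)"
    and "x + c \<le> length U"
  shows "j - x \<le> j'" and "j' - (j - x) + c \<le> length U'"
    and "take c (drop x U) = take c (drop (j' - (j - x)) U')"
proof -
  have nth: "j \<le> j' + (x + t) \<and> j' + (x + t) - j < length U' \<and> U ! (x + t) = U' ! (j' + (x + t) - j)"
    if "t < c" for t
    using window_eq_nth_nat[OF w, of "x + t"] that assms by simp
  have "0 < c" "c - 1 < c" using assms by linarith+
  show jx: "j - x \<le> j'" using nth[OF \<open>0 < c\<close>] assms by linarith
  have "j' + (x + (c - 1)) - j < length U'" using nth[OF \<open>c - 1 < c\<close>] by blast
  thus "j' - (j - x) + c \<le> length U'" using jx assms by linarith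
  show "take c (drop x U) = take c (drop (j' - (j - x)) U')"
  proof (rule nth_equalityI)
    show "length (take c (drop x U)) = length (take c (drop (j' - (j - x)) U'))"
      using \<open>j' - (j - x) + c \<le> length U'\<close> assms by simp
    fix t assume "t < length (take c (drop x U))"
    hence "t < c" by simp
    moreover have "j' + (x + t) - j = j' - (j - x) + t" using \<open>j - x \<le> j'\<close> assms by linarith
    ultimately show "take c (drop x U) ! t = take c (drop (j' - (j - x)) U') ! t"
      using nth[of t] assms by simp
  qed
qed

context block_words
begin

lemma in_nb_block_pos:
  assumes "x \<le> j" "j < x + c" "j < length U" "o' < length (block_word r s (U ! j))"
    and "length u = block_pos r s U (x + c) - block_pos r s U x"
  shows "in_nb (block_pos r s U j + o') (block_pos r s U x, u)"
proof -
  have "block_pos r s U j + o' < block_pos r s U (Suc j)" using block_pos_Suc assms(3,4) by simp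
  moreover have "block_pos r s U (Suc j) \<le> block_pos r s U (x + c)" using block_pos_mono assms(2) by simp
  ultimately show ?thesis
    unfolding in_nb_def prod.sel using block_pos_mono[of x j U] block_pos_mono[of x "x + c" U] assms(1,5)
    by linarith
qed

lemma window_eq_blocks_word_nth:
  assumes "window D U j = window D U' j'" "j < length U" "o' < length (block_word r s (U ! j))"
  shows "blocks_word r s U ! (block_pos r s U j + o') = blocks_word r s U' ! (block_pos r s U' j' + o')"
  using window_eq_center[OF assms(1,2)] blocks_word_nth[OF assms(2,3)] blocks_word_nth[of j' U' o'] assms(3)
  by simp

lemma regular_word_prefix: "regular_word r s S m k U \<Longrightarrow> i < S \<Longrightarrow> U ! i = Bv"
  by (simp add: regular_word_def)

lemma regular_word_suffix: "regular_word r s S m k U \<Longrightarrow> i < S \<Longrightarrow> U ! (length U - Suc i) = Bv"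
  by (simp add: regular_word_def)

lemma regular_word_isolated:
  "regular_word r s S m k U \<Longrightarrow> i < i' \<Longrightarrow> i' < length U \<Longrightarrow> U ! i \<noteq> Bv \<Longrightarrow> U ! i' \<noteq> Bv \<Longrightarrow>
    S < i' - i"
  by (simp add: regular_word_def)

lemma regular_word_nbhds:
  "regular_word r s S m k U \<Longrightarrow> nbhds r s S m (blocks_word r s U) = block_nbhds r s m U"
  by (simp add: regular_word_def)

lemma regular_word_length:
  "regular_word r s S m k U \<Longrightarrow> 2 * margin S m k k + 3 * period S + 2 \<le> length U"
  by (simp add: regular_word_def)

lemma regular_word_window_periodic:
  "regular_word r s S m k U \<Longrightarrow> D \<le> radius m k \<Longrightarrow> D \<le> j \<Longrightarrow> j + D < length U \<Longrightarrow>
    \<exists>\<rho> < period S. window D U j = periodic_window S D \<rho>"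
  by (simp add: regular_word_def)

lemma regular_word_window_covers:
  "regular_word r s S m k U \<Longrightarrow> D \<le> radius m k \<Longrightarrow> \<rho> < period S \<Longrightarrow> D \<le> x \<Longrightarrow>
    x + 3 * period S + D < length U \<Longrightarrow>
    \<exists>j. x \<le> j \<and> j \<le> x + 3 * period S \<and> window D U j = periodic_window S D \<rho>"
  by (simp add: regular_word_def)

lemma regular_wordI:
  assumes "2 * margin S m k k + 3 * period S + 2 \<le> length U"
    and "\<And>i. i < S \<Longrightarrow> U ! i = Bv" and "\<And>i. i < S \<Longrightarrow> U ! (length U - Suc i) = Bv"
    and "\<And>i i'. i < i' \<Longrightarrow> i' < length U \<Longrightarrow> U ! i \<noteq> Bv \<Longrightarrow> U ! i' \<noteq> Bv \<Longrightarrow> S < i' - i"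
    and "\<And>D j. D \<le> radius m k \<Longrightarrow> D \<le> j \<Longrightarrow> j + D < length U \<Longrightarrow>
      \<exists>\<rho> < period S. window D U j = periodic_window S D \<rho>"
    and "\<And>D x \<rho>. D \<le> radius m k \<Longrightarrow> \<rho> < period S \<Longrightarrow> D \<le> x \<Longrightarrow> x + 3 * period S + D < length U \<Longrightarrow>
      \<exists>j. x \<le> j \<and> j \<le> x + 3 * period S \<and> window D U j = periodic_window S D \<rho>"
    and "nbhds r s S m (blocks_word r s U) = block_nbhds r s m U"
  shows "regular_word r s S m k U"
  using assms unfolding regular_word_def by blast

lemma regular_word_length_ge: "regular_word r s S m k U \<Longrightarrow> 2 * S \<le> length U"
  using regular_word_length[of S m k U] by (simp add: margin_def period_def)

lemma block_pos_prefix: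
  assumes "regular_word r s S m k U" "j \<le> S"
  shows "block_pos r s U j = j * length (vword r s)"
  using block_pos_run_Bv[of 0 j U] assms regular_word_prefix[OF assms(1)]
    regular_word_length_ge[OF assms(1)] by (simp add: block_pos_def)

lemma length_blocks_word_suffix:
  assumes "regular_word r s S m k U" "c \<le> S"
  shows "length (blocks_word r s U) = block_pos r s U (length U - c) + c * length (vword r s)"
proof -
  have L: "2 * S \<le> length U" using regular_word_length_ge[OF assms(1)] .
  have "\<forall>t<c. U ! (length U - c + t) = Bv"
  proof (intro allI impI)
    fix t assume "t < c"
    hence "length U - c + t = length U - Suc (c - 1 - t)" "c - 1 - t < S" using assms L by auto
    thus "U ! (length U - c + t) = Bv" using regular_word_suffix[OF assms(1)] by simp
  qed
  hence "block_pos r s U (length U - c + c) = block_pos r s U (length U - c) + c * length (vword r s)"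
    using block_pos_run_Bv[of "length U - c" c U] assms L by simp
  thus ?thesis using assms L by (simp add: length_blocks_word)
qed

lemma regular_word_adjacent_Bv:
  assumes "regular_word r s S m k U" "1 \<le> S" "Suc i < length U"
  shows "U ! i = Bv \<or> U ! Suc i = Bv"
proof (rule ccontr)
  assume "\<not> (U ! i = Bv \<or> U ! Suc i = Bv)"
  hence "S < Suc i - i" using regular_word_isolated[OF assms(1), of i "Suc i"] assms by simp
  thus False using assms(2) by simp
qed

lemma not_in_nbhds_if_isolated:
  assumes ok: "regular_word r s S m k U" and mS: "m \<le> S"
    and j: "m \<le> j" "j + m < length U" and nf: "\<forall>i<length U. i \<le> j + m \<longrightarrow> j \<le> i + m \<longrightarrow> U ! i = Bv"
    and o: "o' < length (block_word r s (U ! j))"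
  shows "\<forall>kk p u. (kk, p, u) \<in> nbhds r s S m (blocks_word r s U) \<longrightarrow> \<not> in_nb (block_pos r s U j + o') (p, u)"
proof (intro allI impI)
  fix kk p u assume "(kk, p, u) \<in> nbhds r s S m (blocks_word r s U)"
  hence mem: "(kk, p, u) \<in> block_nbhds r s m U" using regular_word_nbhds[OF ok] by simp
  let ?V = "length (vword r s)"
  let ?q = "block_pos r s U j + o'"
  have jl: "j < length U" using j by simp
  have q1: "?q < block_pos r s U (Suc j)" using block_pos_Suc[OF jl] o by simp
  have pm: "block_pos r s U m = m * ?V" using block_pos_prefix[OF ok mS] .
  have qlo: "m * ?V \<le> ?q" using block_pos_mono[of m j U] j pm by simp
  have lw: "length (blocks_word r s U) = block_pos r s U (length U - m) + m * ?V"
    using length_blocks_word_suffix[OF ok mS] .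
  have "Suc j \<le> length U - m" using j by linarith
  hence qhi: "?q < block_pos r s U (length U - m)"
    using q1 block_pos_mono[of "Suc j" "length U - m" U] by simp
  have "(kk = NPre \<and> p = 0 \<and> u = wpow (vword r s) m) \<or>
     (kk = NSuf \<and> p = length (blocks_word r s U) - m * ?V \<and> u = wpow (vword r s) m) \<or>
     (\<exists>jf. kk = NMid \<and> jf < length U \<and> U ! jf \<noteq> Bv \<and> p = block_pos r s U jf - m * ?V \<and>
        u = wpow (vword r s) m @ block_word r s (U ! jf) @ wpow (vword r s) m)"
    using mem unfolding block_nbhds_def Let_def length_wpow_vword by auto
  then consider "kk = NPre" "p = 0" "u = wpow (vword r s) m"
    | "kk = NSuf" "p = length (blocks_word r s U) - m * ?V" "u = wpow (vword r s) m"
    | jf where "kk = NMid" "jf < length U" "U ! jf \<noteq> Bv" "p = block_pos r s U jf - m * ?V"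
        "u = wpow (vword r s) m @ block_word r s (U ! jf) @ wpow (vword r s) m"
    by blast
  thus "\<not> in_nb ?q (p, u)"
  proof cases
    case 1 thus ?thesis using qlo by (simp add: in_nb_def length_wpow_vword)
  next
    case 2 thus ?thesis using qhi lw by (simp add: in_nb_def)
  next
    case 3
    have far: "j + m < jf \<or> jf + m < j" using nf 3 by (meson not_le)
    thus ?thesis
    proof
      assume a: "j + m < jf"
      have "\<forall>t<m. U ! (Suc j + t) = Bv" using nf a 3 by auto
      hence "block_pos r s U (Suc j + m) = block_pos r s U (Suc j) + m * ?V"
        using block_pos_run_Bv[of "Suc j" m U] a 3 by simp
      moreover have "block_pos r s U (Suc j + m) \<le> block_pos r s U jf" using block_pos_mono a by simp
      ultimately have "?q < p" using q1 3 by simp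
      thus ?thesis by (simp add: in_nb_def)
    next
      assume a: "jf + m < j"
      have "S \<le> jf" using regular_word_prefix[OF ok, of jf] 3 by (meson not_le)
      hence pf: "m * ?V \<le> block_pos r s U jf" using block_pos_mono[of m jf U] pm mS by simp
      have "\<forall>t<m. U ! (j - m + t) = Bv" using nf a j by auto
      hence "block_pos r s U (j - m + m) = block_pos r s U (j - m) + m * ?V"
        using block_pos_run_Bv[of "j - m" m U] a j by simp
      hence pj: "block_pos r s U j = block_pos r s U (j - m) + m * ?V" using j by simp
      have "block_pos r s U (Suc jf) \<le> block_pos r s U (j - m)" using block_pos_mono a by simp
      hence "p + length u \<le> ?q" using block_pos_Suc[of jf U] 3 pf pj by (simp add: length_wpow_vword)
      thus ?thesis by (simp add: in_nb_def)
    qed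
  qed
qed

lemma regular_word_mark_bounds:
  assumes ok: "regular_word r s S m k U" and "jf < length U" "U ! jf \<noteq> Bv"
  shows "S \<le> jf" and "jf + S < length U"
proof -
  show "S \<le> jf" using regular_word_prefix[OF ok, of jf] assms by (cases "jf < S") auto
  show "jf + S < length U"
  proof (rule ccontr)
    assume "\<not> jf + S < length U"
    hence "length U - Suc (length U - 1 - jf) = jf" "length U - 1 - jf < S" using assms by auto
    thus False using regular_word_suffix[OF ok, of "length U - 1 - jf"] assms by simp
  qed
qed

lemma regular_word_Bv_near_mark:
  assumes ok: "regular_word r s S m k U" and "jf < length U" "U ! jf \<noteq> Bv"
    and "i < length U" "i \<noteq> jf" "i \<le> jf + S" "jf \<le> i + S"
  shows "U ! i = Bv"
proof (rule ccontr)
  assume "U ! i \<noteq> Bv"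
  hence "S < jf - i \<or> S < i - jf"
    using regular_word_isolated[OF ok, of i jf] regular_word_isolated[OF ok, of jf i] assms
    by (cases "i < jf") auto
  thus False using assms by linarith
qed

lemma regular_word_mark_nbhd:
  assumes ok: "regular_word r s S m k U" and mS: "m \<le> S" and jf: "jf < length U" "U ! jf \<noteq> Bv"
  defines "u \<equiv> wpow (vword r s) m @ block_word r s (U ! jf) @ wpow (vword r s) m"
  shows "(NMid, block_pos r s U (jf - m), u) \<in> nbhds r s S m (blocks_word r s U)"
    and "length u = block_pos r s U (jf - m + (2 * m + 1)) - block_pos r s U (jf - m)"
proof -
  let ?V = "length (vword r s)"
  have bounds: "S \<le> jf" "jf + S < length U" using regular_word_mark_bounds[OF ok jf] by auto
  have left: "block_pos r s U jf = block_pos r s U (jf - m) + m * ?V"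
    using block_pos_run_Bv[of "jf - m" m U] regular_word_Bv_near_mark[OF ok jf] bounds mS by simp
  have right: "block_pos r s U (Suc jf + m) = block_pos r s U (Suc jf) + m * ?V"
    using block_pos_run_Bv[of "Suc jf" m U] regular_word_Bv_near_mark[OF ok jf] bounds mS by simp
  show "(NMid, block_pos r s U (jf - m), u) \<in> nbhds r s S m (blocks_word r s U)"
    unfolding regular_word_nbhds[OF ok] block_nbhds_def Let_def u_def length_wpow_vword
    by (rule UnI2, rule CollectI, rule exI[of _ jf]) (use left jf in simp)
  have "jf - m + (2 * m + 1) = Suc jf + m" using bounds mS by linarith
  thus "length u = block_pos r s U (jf - m + (2 * m + 1)) - block_pos r s U (jf - m)"
    unfolding u_def using left right block_pos_Suc[OF jf(1)]
      by (simp only:) (simp add: length_wpow_vword)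
qed

lemma regular_word_prefix_nbhd:
  assumes ok: "regular_word r s S m k U" and "m \<le> S" "j < m" "j < length U"
    and o: "o' < length (block_word r s (U ! j))"
  shows "(NPre, 0, wpow (vword r s) m) \<in> nbhds r s S m (blocks_word r s U)"
    and "in_nb (block_pos r s U j + o') (0, wpow (vword r s) m)"
    and "block_pos r s U j = j * length (vword r s)"
proof -
  show "(NPre, 0, wpow (vword r s) m) \<in> nbhds r s S m (blocks_word r s U)"
    using regular_word_nbhds[OF ok] by (simp add: block_nbhds_def Let_def)
  have "length (wpow (vword r s) m) = block_pos r s U (0 + m) - block_pos r s U 0"
    using block_pos_prefix[OF ok \<open>m \<le> S\<close>] by (simp add: length_wpow_vword)
  from in_nb_block_pos[OF _ _ _ o this] assms
  show "in_nb (block_pos r s U j + o') (0, wpow (vword r s) m)" by simp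
  show "block_pos r s U j = j * length (vword r s)" using block_pos_prefix[OF ok] assms by simp
qed

lemma regular_word_suffix_nbhd:
  assumes ok: "regular_word r s S m k U" and "m \<le> S" "0 < c" "c \<le> m"
    and o: "o' < length (block_word r s (U ! (length U - c)))"
  shows "(NSuf, block_pos r s U (length U - m), wpow (vword r s) m) \<in> nbhds r s S m (blocks_word r s U)"
    and "in_nb (block_pos r s U (length U - c) + o') (block_pos r s U (length U - m), wpow (vword r s) m)"
    and "block_pos r s U (length U - c) = block_pos r s U (length U - m) + (m - c) * length (vword r s)"
proof -
  have L: "m \<le> length U" using regular_word_length_ge[OF ok] assms by linarith
  have suf: "length (blocks_word r s U) = block_pos r s U (length U - m) + length (wpow (vword r s) m)"
    using length_blocks_word_suffix[OF ok \<open>m \<le> S\<close>] by (simp add: length_wpow_vword)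
  show "(NSuf, block_pos r s U (length U - m), wpow (vword r s) m) \<in> nbhds r s S m (blocks_word r s U)"
    using regular_word_nbhds[OF ok] suf by (simp add: block_nbhds_def Let_def)
  have "length (wpow (vword r s) m) = block_pos r s U (length U - m + m) - block_pos r s U (length U - m)"
    using suf L by (simp add: length_blocks_word)
  from in_nb_block_pos[OF _ _ _ o this] assms L
  show "in_nb (block_pos r s U (length U - c) + o') (block_pos r s U (length U - m), wpow (vword r s) m)"
    by simp
  show "block_pos r s U (length U - c) = block_pos r s U (length U - m) + (m - c) * length (vword r s)"
    using length_blocks_word_suffix[OF ok, of c] length_blocks_word_suffix[OF ok, of m] assms
    by (simp add: diff_mult_distrib)
qed

lemma regular_word_Bv_between:
  assumes "regular_word r s S m k U" "1 \<le> S" "a + 3 \<le> b" "b < length U"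
  shows "\<exists>l. a < l \<and> l < b \<and> U ! l = Bv"
proof -
  have A: "Suc (Suc a) < length U" using assms by linarith
  from regular_word_adjacent_Bv[OF assms(1,2) A] show ?thesis
  proof
    assume "U ! Suc a = Bv" thus ?thesis using assms by (intro exI[of _ "Suc a"]) auto
  next
    assume "U ! Suc (Suc a) = Bv" thus ?thesis using assms by (intro exI[of _ "Suc (Suc a)"]) auto
  qed
qed

lemma window_eq_close_move:
  assumes w: "window D U j = window D U' j'" and "2 \<le> D" and j: "j < length U" "j1 < length U"
    and close: "j1 \<le> j + 2" "j \<le> j1 + 2" and j2: "j' + j1 = j2 + j"
    and o: "o' < length (block_word r s (U ! j))" "o1 < length (block_word r s (U ! j1))"
  defines "q \<equiv> block_pos r s U j + o'" and "q1 \<equiv> block_pos r s U j1 + o1"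
    and "q' \<equiv> block_pos r s U' j' + o'" and "q2 \<equiv> block_pos r s U' j2 + o1"
  shows "q1 - q = q2 - q'" and "q - q1 = q' - q2"
    and "jumped (blocks_word r s U) q q1 = jumped (blocks_word r s U') q' q2"
proof -
  define x where "x = min j j1"
  define c where "c = max j j1 - x + 1"
  define x' where "x' = j' - (j - x)"
  have x: "x \<le> j" "j < x + c" "j \<le> x + D" "x + c \<le> Suc (j + D)" "x + c \<le> length U"
    using assms unfolding x_def c_def by linarith+
  note take_eq = window_eq_take_eq[OF w x, folded x'_def]
  have ab: "j = x + (j - x)" "j1 = x + (j1 - x)" "j' = x' + (j - x)" "j2 = x' + (j1 - x)"
    "j - x < c" "j1 - x < c"
    using take_eq(1) j2 close unfolding x_def c_def x'_def by linarith+
  define M where "M = block_pos r s U (x + c) - block_pos r s U x"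
  define t where "t = block_pos r s U j - block_pos r s U x + o'"
  define t1 where "t1 = block_pos r s U j1 - block_pos r s U x + o1"
  have diff: "block_pos r s U j - block_pos r s U x = block_pos r s U' j' - block_pos r s U' x'"
    "block_pos r s U j1 - block_pos r s U x = block_pos r s U' j2 - block_pos r s U' x'"
    using block_pos_diff_eq_if_take_eq[OF take_eq(3), of "j - x"]
      block_pos_diff_eq_if_take_eq[OF take_eq(3), of "j1 - x"] ab by simp_all
  have mono: "block_pos r s U x \<le> block_pos r s U j" "block_pos r s U x \<le> block_pos r s U j1"
    "block_pos r s U' x' \<le> block_pos r s U' j'" "block_pos r s U' x' \<le> block_pos r s U' j2"
    using block_pos_mono ab by (metis le_add1)+
  have qs: "q = block_pos r s U x + t" "q1 = block_pos r s U x + t1"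
    "q' = block_pos r s U' x' + t" "q2 = block_pos r s U' x' + t1"
    using diff mono unfolding q_def q1_def q'_def q2_def t_def t1_def by simp_all
  thus "q1 - q = q2 - q'" "q - q1 = q' - q2" by simp_all
  have "block_pos r s U j + o' < block_pos r s U (x + c)"
    "block_pos r s U j1 + o1 < block_pos r s U (x + c)"
    using block_pos_Suc_le[of j U "x + c"] block_pos_Suc_le[of j1 U "x + c"] ab j o by simp_all
  hence "t < M" "t1 < M" using mono(1,2) unfolding t_def t1_def M_def by linarith+
  thus "jumped (blocks_word r s U) q q1 = jumped (blocks_word r s U') q' q2"
    unfolding qs M_def using jumped_shift blocks_word_nth_eq_if_take_eq[OF take_eq(3)] by blast
qed

(* A move by three or more blocks crosses a whole v-block and so jumps over every letter. *)
lemma regular_word_far_move: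
  assumes ok: "regular_word r s S m k U" and "1 \<le> S" and j: "j + 3 \<le> j1" "j1 < length U"
    and o: "o' < length (block_word r s (U ! j))" "o1 < length (block_word r s (U ! j1))"
  shows "block_pos r s U j + o' < block_pos r s U j1 + o1"
    and "jumped (blocks_word r s U) (block_pos r s U j + o') (block_pos r s U j1 + o1) = set (vword r s)"
proof -
  show "block_pos r s U j + o' < block_pos r s U j1 + o1"
    using block_pos_add_less_iff[of j U o' j1 o1] assms by simp
  obtain l where "j < l" "l < j1" "U ! l = Bv"
    using regular_word_Bv_between[OF ok \<open>1 \<le> S\<close> j] by blast
  thus "jumped (blocks_word r s U) (block_pos r s U j + o') (block_pos r s U j1 + o1) = set (vword r s)"
    using jumped_across_Bv j o by blast
qed

end

section \<open>The strategy for Player 2\<close>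

(* Player 2's invariant for pebbles in blocks j, j' with n rounds left. *)
definition linked :: "nat \<Rightarrow> nat \<Rightarrow> nat \<Rightarrow> block list \<Rightarrow> block list \<Rightarrow> nat \<Rightarrow> nat \<Rightarrow> nat \<Rightarrow> bool" where
  "linked S m k U U' n j j' \<longleftrightarrow> window (radius m n) U j = window (radius m n) U' j' \<and>
     (j = j' \<or> margin S m k n \<le> j \<and> margin S m k n \<le> j') \<and>
     (length U - j = length U' - j' \<or> margin S m k n \<le> length U - j \<and> margin S m k n \<le> length U' - j')"

definition linked_pos :: "nat \<Rightarrow> nat \<Rightarrow> nat \<Rightarrow> nat \<Rightarrow> nat \<Rightarrow> block list \<Rightarrow> block list \<Rightarrow> nat \<Rightarrow> nat \<Rightarrow> nat \<Rightarrow> bool" where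
  "linked_pos r s S m k U U' n q q' \<longleftrightarrow>
    (\<exists>j j' o'. j < length U \<and> j' < length U' \<and> o' < length (block_word r s (U ! j)) \<and>
      q = block_pos r s U j + o' \<and> q' = block_pos r s U' j' + o' \<and> linked S m k U U' n j j')"

lemma linked_sym: "linked S m k U U' n j j' = linked S m k U' U n j' j"
  unfolding linked_def by auto

locale twin_words = block_words +
  fixes S m k K :: nat and U U' :: "block list"
  assumes regular_U: "regular_word r s S m k U" and regular_U': "regular_word r s S m k U'"
    and S_large: "2 * radius m k + 2 \<le> S"
    and margin_le_K: "margin S m k k + radius m k + 1 \<le> K"
    and K_le_length: "K \<le> length U" "K \<le> length U'"
    and prefix_eq: "\<forall>i<K. U ! i = U' ! i"
    and suffix_eq: "\<forall>i<K. U ! (length U - Suc i) = U' ! (length U' - Suc i)"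
begin

lemma twin_words_swap: "twin_words r s S m k K U' U"
  using regular_U regular_U' S_large margin_le_K K_le_length prefix_eq suffix_eq by unfold_locales auto

lemma margin_Suc: "margin S m k (Suc n) = margin S m k n + (3 * period S + radius m k + 4)"
  by (simp add: margin_def)
lemma margin_mono: "n \<le> n' \<Longrightarrow> margin S m k n \<le> margin S m k n'" by (simp add: margin_def)
lemma margin_ge: "3 * period S + radius m k + 4 \<le> margin S m k n" by (simp add: margin_def)
lemma radius_mono: "n \<le> n' \<Longrightarrow> radius m n \<le> radius m n'" by (simp add: radius_def)

lemma m_less_margin: "m < margin S m k n"
  using margin_ge[of n] by (simp add: radius_def)

lemma m_le_S: "m \<le> S"
  using S_large by (simp add: radius_def)

lemma window_eq_prefix: "j + D < K \<Longrightarrow> window D U j = window D U' j"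
proof
  fix l assume a: "j + D < K"
  show "window D U j l = window D U' j l"
  proof (cases "\<bar>l\<bar> \<le> int D \<and> 0 \<le> int j + l")
    case True
    hence "nat (int j + l) < K" using a by linarith
    moreover have "int j + l < int K" using True a by linarith
    ultimately show ?thesis using prefix_eq K_le_length True by (auto simp: window_def)
  next
    case False thus ?thesis by (auto simp: window_def)
  qed
qed

lemma window_eq_suffix:
  assumes c: "1 \<le> c" "c + D \<le> K"
  shows "window D U (length U - c) = window D U' (length U' - c)"
proof
  fix l
  show "window D U (length U - c) l = window D U' (length U' - c) l"
  proof (cases "\<bar>l\<bar> \<le> int D \<and> l < int c")
    case True
    define i where "i = nat (int c - 1 - l)"
    have iK: "i < K" using True c unfolding i_def by linarith
    have e1: "nat (int (length U - c) + l) = length U - Suc i"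
      and e2: "nat (int (length U' - c) + l) = length U' - Suc i"
      using True c K_le_length unfolding i_def by linarith+
    have r1: "0 \<le> int (length U - c) + l" "int (length U - c) + l < int (length U)"
      using True c K_le_length by linarith+
    have r2: "0 \<le> int (length U' - c) + l" "int (length U' - c) + l < int (length U')"
      using True c K_le_length by linarith+
    show ?thesis using r1 r2 True suffix_eq iK unfolding window_def e1 e2 by simp
  next
    case False
    hence "\<not> (\<bar>l\<bar> \<le> int D \<and> 0 \<le> int (length U - c) + l \<and> int (length U - c) + l < int (length U))"
          "\<not> (\<bar>l\<bar> \<le> int D \<and> 0 \<le> int (length U' - c) + l \<and> int (length U' - c) + l < int (length U'))"
      using c K_le_length by linarith+
    thus ?thesis unfolding window_def by auto
  qed
qed

lemma linked_in_prefix: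
  assumes "n \<le> k" "j1 < margin S m k k"
  shows "j1 < length U' \<and> linked S m k U U' n j1 j1"
proof -
  have "j1 + radius m n < K" using assms margin_le_K radius_mono[of n k] by linarith
  hence w: "window (radius m n) U j1 = window (radius m n) U' j1" by (rule window_eq_prefix)
  have "margin S m k n \<le> margin S m k k" using margin_mono assms by simp
  thus ?thesis using w regular_word_length[OF regular_U] regular_word_length[OF regular_U'] assms
    unfolding linked_def by auto
qed

lemma linked_in_suffix:
  assumes "n \<le> k" "j1 < length U" "length U - j1 < margin S m k k"
  shows "length U' - (length U - j1) < length U' \<and> linked S m k U U' n j1 (length U' - (length U - j1))"
proof -
  define c where "c = length U - j1"
  have c1: "1 \<le> c" "c + radius m n \<le> K"
    using assms margin_le_K radius_mono[of n k] unfolding c_def by linarith+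
  have j1: "j1 = length U - c" using assms unfolding c_def by simp
  have w: "window (radius m n) U j1 = window (radius m n) U' (length U' - c)"
    using window_eq_suffix[OF c1] j1 by simp
  have "margin S m k n \<le> margin S m k k" using margin_mono assms by simp
  thus ?thesis using w regular_word_length[OF regular_U] regular_word_length[OF regular_U'] assms c1
    unfolding linked_def c_def by auto
qed

lemma linked_in_interior:
  assumes "n \<le> k" "margin S m k n \<le> j1" "margin S m k n \<le> length U - j1" "margin S m k n \<le> x"
    "x + 3 * period S + margin S m k n \<le> length U'"
  shows "\<exists>j2. x \<le> j2 \<and> j2 \<le> x + 3 * period S \<and> j2 < length U' \<and> linked S m k U U' n j1 j2"
proof -
  have Dk: "radius m n \<le> radius m k" using radius_mono assms by simp
  have EE: "radius m k + 4 \<le> margin S m k n" using margin_ge[of n] by linarith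
  obtain \<rho> where \<rho>: "\<rho> < period S" "window (radius m n) U j1 = periodic_window S (radius m n) \<rho>"
  proof -
    have "radius m n \<le> j1" "j1 + radius m n < length U" using assms(2,3) EE Dk by linarith+
    thus ?thesis using regular_word_window_periodic[OF regular_U Dk] that by blast
  qed
  obtain j2 where j2: "x \<le> j2" "j2 \<le> x + 3 * period S"
    "window (radius m n) U' j2 = periodic_window S (radius m n) \<rho>"
  proof -
    have "radius m n \<le> x" "x + 3 * period S + radius m n < length U'" using assms(4,5) EE Dk by linarith+
    thus ?thesis using regular_word_window_covers[OF regular_U' Dk \<rho>(1)] that by blast
  qed
  have "j2 < length U'" using j2 assms margin_ge[of n] by linarith
  thus ?thesis using j2 \<rho> assms unfolding linked_def by (intro exI[of _ j2]) auto
qed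

lemma linked_exists:
  assumes "n \<le> k" "j1 < length U"
  shows "\<exists>j2 < length U'. linked S m k U U' n j1 j2"
proof -
  have Ek: "margin S m k n \<le> margin S m k k" using margin_mono assms by simp
  consider "j1 < margin S m k n" | "length U - j1 < margin S m k n"
    | "margin S m k n \<le> j1" "margin S m k n \<le> length U - j1"
    by linarith
  thus ?thesis
  proof cases
    case 1 thus ?thesis using linked_in_prefix[OF assms(1)] Ek by (meson less_le_trans)
  next
    case 2 thus ?thesis using linked_in_suffix[OF assms] Ek by (meson less_le_trans)
  next
    case 3
    have "margin S m k n + 3 * period S + margin S m k n \<le> length U'"
      using regular_word_length[OF regular_U'] Ek by linarith
    thus ?thesis using linked_in_interior[OF assms(1) 3 order.refl] by blast
  qed
qed

lemma linked_response_close: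
  assumes inv: "linked S m k U U' (Suc n) j j'" and jl: "j < length U" "j' < length U'"
    and j1: "j1 < length U" "j1 \<le> j + 2" "j \<le> j1 + 2"
  shows "\<exists>j2 < length U'. linked S m k U U' n j1 j2 \<and> j' + j1 = j2 + j"
proof -
  define c where "c = 3 * period S + radius m k + 4"
  define E0 where "E0 = margin S m k n"
  have E1: "margin S m k (Suc n) = E0 + c" unfolding E0_def c_def by (rule margin_Suc)
  have "c \<le> E0" "4 \<le> c" unfolding E0_def c_def using margin_ge by simp_all
  have w: "window (radius m (Suc n)) U j = window (radius m (Suc n)) U' j'"
    and at_start: "j = j' \<or> E0 + c \<le> j \<and> E0 + c \<le> j'"
    and at_end: "length U - j = length U' - j' \<or> E0 + c \<le> length U - j \<and> E0 + c \<le> length U' - j'"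
    using inv unfolding linked_def E1 by auto
  define d where "d = int j1 - int j"
  have "radius m (Suc n) = radius m n + 2" by (simp add: radius_def)
  hence d: "\<bar>d\<bar> + int (radius m n) \<le> int (radius m (Suc n))" using j1 unfolding d_def by linarith
  have rj: "0 \<le> int j + d" "int j + d < int (length U)" using j1 unfolding d_def by linarith+
  have r2: "0 \<le> int j' + d" "int j' + d < int (length U')"
    using window_eq_nth[OF w _ rj] d by auto
  define j2 where "j2 = nat (int j' + d)"
  have ww: "window (radius m n) U j1 = window (radius m n) U' j2"
    using window_eq_shift[OF w d rj] unfolding j2_def d_def by simp
  have j2: "j2 < length U'" "j' + j1 = j2 + j" using r2 unfolding j2_def d_def by linarith+
  have "j1 = j2 \<or> E0 \<le> j1 \<and> E0 \<le> j2"
    using at_start j1 j2 \<open>c \<le> E0\<close> \<open>4 \<le> c\<close> by linarith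
  moreover have "length U - j1 = length U' - j2 \<or> E0 \<le> length U - j1 \<and> E0 \<le> length U' - j2"
    using at_end j1 j2 jl \<open>c \<le> E0\<close> \<open>4 \<le> c\<close> by linarith
  ultimately show ?thesis using ww j2 unfolding linked_def E0_def by blast
qed

lemma linked_response_right:
  assumes inv: "linked S m k U U' (Suc n) j j'" and nk: "Suc n \<le> k"
    and j1: "j1 < length U" "j + 3 \<le> j1"
  shows "\<exists>j2 < length U'. linked S m k U U' n j1 j2 \<and> j' + 3 \<le> j2"
proof -
  define c where "c = 3 * period S + radius m k + 4"
  define E0 where "E0 = margin S m k n"
  have E1: "margin S m k (Suc n) = E0 + c" unfolding E0_def c_def by (rule margin_Suc)
  have "c \<le> E0" "4 \<le> c" unfolding E0_def c_def using margin_ge by simp_all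
  have Ek: "E0 + c \<le> margin S m k k" using margin_mono[OF nk] E1 by simp
  have L: "2 * (E0 + c) + 3 * period S + 2 \<le> length U'"
    using regular_word_length[OF regular_U'] Ek by auto
  have nk': "n \<le> k" using nk by simp
  have at_start: "j = j' \<or> E0 + c \<le> j \<and> E0 + c \<le> j'"
    and at_end: "length U - j = length U' - j' \<or> E0 + c \<le> length U - j \<and> E0 + c \<le> length U' - j'"
    using inv unfolding linked_def E1 by auto
  consider "length U - j < E0 + c" | "E0 + c \<le> length U - j" "length U - j1 < E0"
    | "E0 + c \<le> length U - j" "E0 \<le> length U - j1" "j1 < E0"
    | (interior) "E0 + c \<le> length U - j" "E0 \<le> length U - j1" "E0 \<le> j1" by linarith
  thus ?thesis
  proof cases
    case 1
    hence "length U - j = length U' - j'" "length U - j1 < margin S m k k"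
      using at_end Ek j1 by linarith+
    with linked_in_suffix[OF nk' j1(1)] show ?thesis using j1
      by (intro exI[of _ "length U' - (length U - j1)"]) auto
  next
    case 2
    hence "E0 + c \<le> length U' - j'" "length U - j1 < margin S m k k" using at_end Ek by linarith+
    with linked_in_suffix[OF nk' j1(1)] show ?thesis using j1 \<open>c \<le> E0\<close> \<open>4 \<le> c\<close> 2
      by (intro exI[of _ "length U' - (length U - j1)"]) auto
  next
    case 3
    hence "j = j'" "j1 < margin S m k k" using at_start j1 Ek by linarith+
    with linked_in_prefix[OF nk'] show ?thesis using j1 by (intro exI[of _ j1]) auto
  next
    case interior
    have L2: "E0 + c \<le> length U' - j'" using at_end interior by linarith
    define x where "x = max (j' + 3) E0"
    have x: "E0 \<le> x" "x + 3 * period S + E0 \<le> length U'" using L2 L unfolding x_def c_def by auto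
    obtain j2 where "x \<le> j2" "j2 < length U'" "linked S m k U U' n j1 j2"
      using linked_in_interior[OF nk' interior(3,2)[unfolded E0_def] x[unfolded E0_def]] by blast
    thus ?thesis unfolding x_def by (intro exI[of _ j2]) auto
  qed
qed

lemma linked_response_left:
  assumes inv: "linked S m k U U' (Suc n) j j'" and nk: "Suc n \<le> k"
    and j: "j < length U" "j' < length U'" and j1: "j1 < length U" "j1 + 3 \<le> j"
  shows "\<exists>j2 < length U'. linked S m k U U' n j1 j2 \<and> j2 + 3 \<le> j'"
proof -
  define c where "c = 3 * period S + radius m k + 4"
  define E0 where "E0 = margin S m k n"
  have E1: "margin S m k (Suc n) = E0 + c" unfolding E0_def c_def by (rule margin_Suc)
  have "c \<le> E0" "4 \<le> c" unfolding E0_def c_def using margin_ge by simp_all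
  have Ek: "E0 + c \<le> margin S m k k" using margin_mono[OF nk] E1 by simp
  have L: "2 * (E0 + c) + 3 * period S + 2 \<le> length U'"
    using regular_word_length[OF regular_U'] Ek by auto
  have nk': "n \<le> k" using nk by simp
  have at_start: "j = j' \<or> E0 + c \<le> j \<and> E0 + c \<le> j'"
    and at_end: "length U - j = length U' - j' \<or> E0 + c \<le> length U - j \<and> E0 + c \<le> length U' - j'"
    using inv unfolding linked_def E1 by auto
  consider "j < E0 + c" | "E0 + c \<le> j" "j1 < E0"
    | "E0 + c \<le> j" "E0 \<le> j1" "length U - j1 < E0"
    | (interior) "E0 + c \<le> j" "E0 \<le> j1" "E0 \<le> length U - j1" by linarith
  thus ?thesis
  proof cases
    case 1
    hence "j = j'" "j1 < margin S m k k" using at_start Ek j1 by linarith+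
    with linked_in_prefix[OF nk'] show ?thesis using j1 by (intro exI[of _ j1]) auto
  next
    case 2
    hence "E0 + c \<le> j'" "j1 < margin S m k k" using at_start Ek by linarith+
    with linked_in_prefix[OF nk'] show ?thesis using j1 \<open>c \<le> E0\<close> \<open>4 \<le> c\<close> 2 by (intro exI[of _ j1]) auto
  next
    case 3
    hence "length U - j = length U' - j'" "length U - j1 < margin S m k k"
      using at_end j1 j Ek by linarith+
    with linked_in_suffix[OF nk' j1(1)] show ?thesis using j1 j 3 at_start
      by (intro exI[of _ "length U' - (length U - j1)"]) auto
  next
    case interior
    have L2: "E0 + c \<le> j'" using at_start interior by linarith
    define x where "x = min (j' - 3) (length U' - E0) - 3 * period S"
    have x: "E0 \<le> x" "x + 3 * period S + E0 \<le> length U'" "x + 3 * period S \<le> j' - 3"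
      using L2 L unfolding x_def c_def by auto
    obtain j2 where "j2 \<le> x + 3 * period S" "j2 < length U'" "linked S m k U U' n j1 j2"
      using linked_in_interior[OF nk' interior(2,3)[unfolded E0_def] x(1,2)[unfolded E0_def]] by blast
    thus ?thesis using x L2 \<open>4 \<le> c\<close> by (intro exI[of _ j2]) auto
  qed
qed

lemma linked_response:
  assumes inv: "linked S m k U U' (Suc n) j j'" and nk: "Suc n \<le> k"
    and jl: "j < length U" "j' < length U'" and j1: "j1 < length U"
  shows "\<exists>j2 < length U'. linked S m k U U' n j1 j2 \<and>
     (j1 \<le> j + 2 \<and> j \<le> j1 + 2 \<longrightarrow> j' + j1 = j2 + j) \<and>
     (j + 3 \<le> j1 \<longrightarrow> j' + 3 \<le> j2) \<and> (j1 + 3 \<le> j \<longrightarrow> j2 + 3 \<le> j')"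
proof -
  consider "j1 \<le> j + 2" "j \<le> j1 + 2" | "j + 3 \<le> j1" | "j1 + 3 \<le> j" by linarith
  thus ?thesis
  proof cases
    case 1 thus ?thesis using linked_response_close[OF inv jl j1] by auto
  next
    case 2 thus ?thesis using linked_response_right[OF inv nk j1] by auto
  next
    case 3 thus ?thesis using linked_response_left[OF inv nk jl j1] by auto
  qed
qed

lemma eq0_of_linked_near_start:
  assumes inv: "linked S m k U U' n j1 j2" and j1: "j1 < m" "j1 < length U"
    and o: "o' < length (block_word r s (U ! j1))"
  shows "eq0 r s S m (blocks_word r s U) (block_pos r s U j1 + o')
      (blocks_word r s U') (block_pos r s U' j2 + o')"
proof -
  have w: "window (radius m n) U j1 = window (radius m n) U' j2" and j12: "j2 = j1"
    using inv m_less_margin[of n] j1 unfolding linked_def by auto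
  have "j1 < length U'" "U' ! j1 = U ! j1" using window_eq_center[OF w j1(2)] j12 by auto
  hence o2: "o' < length (block_word r s (U' ! j1))" using o by simp
  show ?thesis
    using eq0_shared_nbhdI[OF window_eq_blocks_word_nth[OF w j1(2) o]]
      regular_word_prefix_nbhd[OF regular_U m_le_S j1 o]
      regular_word_prefix_nbhd[OF regular_U' m_le_S j1(1) _ o2]
      \<open>j1 < length U'\<close> j12 by simp
qed

lemma eq0_of_linked_near_end:
  assumes inv: "linked S m k U U' n j1 j2" and j1: "length U \<le> j1 + m" "j1 < length U"
    and o: "o' < length (block_word r s (U ! j1))"
  shows "eq0 r s S m (blocks_word r s U) (block_pos r s U j1 + o')
      (blocks_word r s U') (block_pos r s U' j2 + o')"
proof -
  define c where "c = length U - j1"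
  have w: "window (radius m n) U j1 = window (radius m n) U' j2" and c': "length U' - j2 = c"
    using inv m_less_margin[of n] j1 unfolding linked_def c_def by auto
  have "j2 < length U'" "U' ! j2 = U ! j1" using window_eq_center[OF w j1(2)] by auto
  hence c: "0 < c" "c \<le> m" "j1 = length U - c" "j2 = length U' - c"
    using j1 c' unfolding c_def by auto
  have o2: "o' < length (block_word r s (U' ! (length U' - c)))"
    using o c \<open>U' ! j2 = U ! j1\<close> by simp
  show ?thesis
    using eq0_shared_nbhdI[OF window_eq_blocks_word_nth[OF w j1(2) o]]
      regular_word_suffix_nbhd[OF regular_U m_le_S c(1,2) o[unfolded c(3)]]
      regular_word_suffix_nbhd[OF regular_U' m_le_S c(1,2) o2] c(3,4) by simp
qed

lemma eq0_of_linked_near_mark: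
  assumes inv: "linked S m k U U' n j1 j2" and j1: "j1 < length U"
    and o: "o' < length (block_word r s (U ! j1))"
    and jf: "jf < length U" "U ! jf \<noteq> Bv" "jf \<le> j1 + m" "j1 \<le> jf + m"
  shows "eq0 r s S m (blocks_word r s U) (block_pos r s U j1 + o')
      (blocks_word r s U') (block_pos r s U' j2 + o')"
proof -
  let ?u = "wpow (vword r s) m @ block_word r s (U ! jf) @ wpow (vword r s) m"
  define c where "c = 2 * m + 1"
  define x1 where "x1 = jf - m"
  define x2 where "x2 = j2 - (j1 - x1)"
  have w: "window (radius m n) U j1 = window (radius m n) U' j2" using inv unfolding linked_def by simp
  have bounds: "S \<le> jf" "jf + S < length U" using regular_word_mark_bounds[OF regular_U jf(1,2)] by auto
  have x1: "x1 \<le> j1" "j1 < x1 + c" "j1 \<le> x1 + radius m n" "x1 + c \<le> Suc (j1 + radius m n)"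
    "x1 + c \<le> length U"
    using jf bounds m_le_S unfolding x1_def c_def radius_def by linarith+
  note take_eq = window_eq_take_eq[OF w x1, folded x2_def]
  have jf': "x2 + m < length U'" "U' ! (x2 + m) = U ! jf"
    using take_eq nth_take[of m c "drop x1 U"] nth_take[of m c "drop x2 U'"] bounds m_le_S
    unfolding x1_def c_def by (auto dest: arg_cong[where f="\<lambda>xs. xs ! m"])
  have "S \<le> x2 + m" using regular_word_mark_bounds[OF regular_U' jf'(1)] jf'(2) jf(2) by simp
  hence x2: "x2 = x2 + m - m" "x2 + m - m + c = x2 + c" by simp_all
  have nb1: "(NMid, block_pos r s U x1, ?u) \<in> nbhds r s S m (blocks_word r s U)"
    and len1: "length ?u = block_pos r s U (x1 + c) - block_pos r s U x1"
    using regular_word_mark_nbhd[OF regular_U m_le_S jf(1,2)] unfolding x1_def c_def by auto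
  have nb2: "(NMid, block_pos r s U' x2, ?u) \<in> nbhds r s S m (blocks_word r s U')"
    and len2: "length ?u = block_pos r s U' (x2 + c) - block_pos r s U' x2"
    using regular_word_mark_nbhd[OF regular_U' m_le_S jf'(1)] jf' jf(2) x2 unfolding c_def by auto
  have j2: "j2 < length U'" "U' ! j2 = U ! j1" using window_eq_center[OF w j1] by auto
  have "in_nb (block_pos r s U j1 + o') (block_pos r s U x1, ?u)"
    using in_nb_block_pos[of x1 j1 c U o' ?u] x1 j1 o len1 by simp
  moreover have "in_nb (block_pos r s U' j2 + o') (block_pos r s U' x2, ?u)"
    using in_nb_block_pos[of x2 j2 c U' o' ?u] take_eq x1 o j2 len2 unfolding x2_def by simp
  moreover have "block_pos r s U j1 - block_pos r s U x1 = block_pos r s U' j2 - block_pos r s U' x2"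
    using block_pos_diff_eq_if_take_eq[OF take_eq(3), of "j1 - x1"] x1 take_eq unfolding x2_def by simp
  moreover have "block_pos r s U x1 \<le> block_pos r s U j1" "block_pos r s U' x2 \<le> block_pos r s U' j2"
    using block_pos_mono x1 unfolding x2_def by simp_all
  ultimately show ?thesis
    using eq0_shared_nbhdI[OF window_eq_blocks_word_nth[OF w j1 o] nb1 nb2] by simp
qed

lemma eq0_of_linked_isolated:
  assumes inv: "linked S m k U U' n j1 j2" and j1: "m \<le> j1" "j1 + m < length U"
    and o: "o' < length (block_word r s (U ! j1))"
    and iso: "\<forall>i<length U. i \<le> j1 + m \<longrightarrow> j1 \<le> i + m \<longrightarrow> U ! i = Bv"
  shows "eq0 r s S m (blocks_word r s U) (block_pos r s U j1 + o')
      (blocks_word r s U') (block_pos r s U' j2 + o')"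
proof -
  have w: "window (radius m n) U j1 = window (radius m n) U' j2" using inv unfolding linked_def by simp
  have j2: "m \<le> j2" "j2 + m < length U'"
    using inv j1 m_less_margin[of n] unfolding linked_def by auto
  have "U' ! j2 = U ! j1" using window_eq_center[OF w] j1 by simp
  hence o2: "o' < length (block_word r s (U' ! j2))" using o by simp
  have iso2: "\<forall>i<length U'. i \<le> j2 + m \<longrightarrow> j2 \<le> i + m \<longrightarrow> U' ! i = Bv"
  proof (intro allI impI)
    fix i assume i: "i < length U'" "i \<le> j2 + m" "j2 \<le> i + m"
    have "i \<le> j2 + radius m n" "j2 \<le> i + radius m n" using i by (auto simp: radius_def)
    from window_eq_nth_nat[OF w[symmetric] i(1) this]
    have "j2 \<le> j1 + i" "j1 + i - j2 < length U" "U' ! i = U ! (j1 + i - j2)" by auto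
    thus "U' ! i = Bv" using iso i by auto
  qed
  show ?thesis
    using eq0_outside_nbhdsI window_eq_blocks_word_nth[OF w _ o] j1
      not_in_nbhds_if_isolated[OF regular_U m_le_S j1 iso o]
      not_in_nbhds_if_isolated[OF regular_U' m_le_S j2 iso2 o2]
    by simp
qed

lemma eq0_of_linked:
  assumes inv: "linked S m k U U' n j1 j2" and j1: "j1 < length U"
    and o: "o' < length (block_word r s (U ! j1))"
  shows "eq0 r s S m (blocks_word r s U) (block_pos r s U j1 + o')
      (blocks_word r s U') (block_pos r s U' j2 + o')"
proof -
  consider "j1 < m" | "length U \<le> j1 + m"
    | (mark) jf where "jf < length U" "U ! jf \<noteq> Bv" "jf \<le> j1 + m" "j1 \<le> jf + m"
    | (isolated) "m \<le> j1" "j1 + m < length U" "\<forall>i<length U. i \<le> j1 + m \<longrightarrow> j1 \<le> i + m \<longrightarrow> U ! i = Bv"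
    by (meson not_le)
  thus ?thesis
  proof cases
    case 1 thus ?thesis using eq0_of_linked_near_start[OF inv _ j1 o] by simp
  next
    case 2 thus ?thesis using eq0_of_linked_near_end[OF inv _ j1 o] by simp
  next
    case mark thus ?thesis using eq0_of_linked_near_mark[OF inv j1 o] by simp
  next
    case isolated thus ?thesis using eq0_of_linked_isolated[OF inv _ _ o] by simp
  qed
qed

lemma linked_same_block:
  assumes "linked S m k U U' n j j'" "j < length U"
  shows "j' < length U'" and "U' ! j' = U ! j"
  using window_eq_center[of "radius m n" U j U' j'] assms unfolding linked_def by auto

lemma linked_posI:
  assumes inv: "linked S m k U U' n j1 j2" and j1: "j1 < length U"
    and o: "o1 < length (block_word r s (U ! j1))"
  shows "linked_pos r s S m k U U' n (block_pos r s U j1 + o1) (block_pos r s U' j2 + o1)"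
    and "block_pos r s U' j2 + o1 < length (blocks_word r s U')"
    and "eq0 r s S m (blocks_word r s U) (block_pos r s U j1 + o1)
        (blocks_word r s U') (block_pos r s U' j2 + o1)"
proof -
  show "linked_pos r s S m k U U' n (block_pos r s U j1 + o1) (block_pos r s U' j2 + o1)"
    unfolding linked_pos_def using assms linked_same_block[OF inv j1] by blast
  show "block_pos r s U' j2 + o1 < length (blocks_word r s U')"
    using block_pos_add_less_length linked_same_block[OF inv j1] o by simp
  show "eq0 r s S m (blocks_word r s U) (block_pos r s U j1 + o1)
      (blocks_word r s U') (block_pos r s U' j2 + o1)"
    using eq0_of_linked[OF assms] .
qed

lemma linked_pos_sym: "linked_pos r s S m k U U' n q q' = linked_pos r s S m k U' U n q' q"
  unfolding linked_pos_def using linked_sym linked_same_block by (metis (no_types, opaque_lifting))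

lemma linked_pos_response:
  assumes G: "linked_pos r s S m k U U' (Suc n) q q'" and nk: "Suc n \<le> k"
    and q1: "q1 < length (blocks_word r s U)" "q1 \<noteq> q"
  shows "\<exists>q2. answers (blocks_word r s U) q q1 (blocks_word r s U') q' q2 \<and>
    eq0 r s S m (blocks_word r s U) q1 (blocks_word r s U') q2 \<and> linked_pos r s S m k U U' n q1 q2"
proof -
  obtain j j' o' where jj: "j < length U" "o' < length (block_word r s (U ! j))"
     "q = block_pos r s U j + o'" "q' = block_pos r s U' j' + o'" and inv: "linked S m k U U' (Suc n) j j'"
    using G unfolding linked_pos_def by blast
  obtain j1 o1 where jj1: "j1 < length U" "o1 < length (block_word r s (U ! j1))" "q1 =
      block_pos r s U j1 + o1"
    using blocks_word_index_cases[OF q1(1)] by blast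
  have j': "j' < length U'" "U' ! j' = U ! j" using linked_same_block[OF inv jj(1)] by auto
  obtain j2 where inv1: "linked S m k U U' n j1 j2"
    and close: "j1 \<le> j + 2 \<and> j \<le> j1 + 2 \<longrightarrow> j' + j1 = j2 + j"
    and right: "j + 3 \<le> j1 \<longrightarrow> j' + 3 \<le> j2" and left: "j1 + 3 \<le> j \<longrightarrow> j2 + 3 \<le> j'"
    using linked_response[OF inv nk jj(1) j'(1) jj1(1)] by blast
  have j2: "j2 < length U'" "U' ! j2 = U ! j1" using linked_same_block[OF inv1 jj1(1)] by auto
  define q2 where "q2 = block_pos r s U' j2 + o1"
  have w: "window (radius m (Suc n)) U j = window (radius m (Suc n)) U' j'" using inv
    unfolding linked_def by simp
  have o2: "o' < length (block_word r s (U' ! j'))" "o1 < length (block_word r s (U' ! j2))"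
    using jj j' jj1 j2 by simp_all
  have S1: "1 \<le> S" using S_large by (simp add: radius_def)
  have move: "q2 \<noteq> q' \<and> (q < q1 \<longleftrightarrow> q' < q2) \<and> jumped (blocks_word r s U') q' q2 =
      jumped (blocks_word r s U) q q1"
  proof -
    consider "j1 \<le> j + 2" "j \<le> j1 + 2" | "j + 3 \<le> j1" | "j1 + 3 \<le> j" by linarith
    thus ?thesis
    proof cases
      case 1
      have "j' + j1 = j2 + j" "2 \<le> radius m (Suc n)" using close 1 by (auto simp: radius_def)
      from window_eq_close_move[OF w this(2) jj(1) jj1(1) 1 this(1) jj(2) jj1(2)]
      show ?thesis using q1(2) unfolding jj(3,4) jj1(3) q2_def by auto
    next
      case 2
      with right regular_word_far_move[OF regular_U S1 2 jj1(1) jj(2) jj1(2)]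
        regular_word_far_move[OF regular_U' S1 _ j2(1) o2]
      show ?thesis unfolding jj(3,4) jj1(3) q2_def by auto
    next
      case 3
      with left regular_word_far_move[OF regular_U S1 3 jj(1) jj1(2) jj(2)]
        regular_word_far_move[OF regular_U' S1 _ j'(1) o2(2,1)]
      show ?thesis unfolding jj(3,4) jj1(3) q2_def by (auto simp: jumped_commute)
    qed
  qed
  have "answers (blocks_word r s U) q q1 (blocks_word r s U') q' q2"
    unfolding answers_def using move linked_posI(2)[OF inv1 jj1(1,2)] j2 jj1
      blocks_word_nth[OF j2(1) o2(2)] blocks_word_nth[OF jj1(1,2)] unfolding q2_def by auto
  thus ?thesis using linked_posI(1,3)[OF inv1 jj1(1,2)] unfolding q2_def jj1(3) by blast
qed

lemma wins_of_linked_pos: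
  assumes "n \<le> k" "linked_pos r s S m k U U' n q q'"
  shows "wins r s S m n (blocks_word r s U) q (blocks_word r s U') q'"
  using assms
proof (induction n arbitrary: q q')
  case (Suc n)
  interpret swapped: twin_words r s S m k K U' U by (rule twin_words_swap)
  have nk: "n \<le> k" using Suc.prems by simp
  show ?case unfolding wins.simps
  proof (intro conjI allI impI)
    fix q1 assume "q1 < length (blocks_word r s U) \<and> q1 \<noteq> q"
    then obtain q2 where "answers (blocks_word r s U) q q1 (blocks_word r s U') q' q2"
      "eq0 r s S m (blocks_word r s U) q1 (blocks_word r s U') q2" "linked_pos r s S m k U U' n q1 q2"
      using linked_pos_response[OF Suc.prems(2,1)] by blast
    thus "\<exists>q2. answers (blocks_word r s U) q q1 (blocks_word r s U') q' q2 \<and>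
        eq0 r s S m (blocks_word r s U) q1 (blocks_word r s U') q2 \<and>
        wins r s S m n (blocks_word r s U) q1 (blocks_word r s U') q2"
      using Suc.IH[OF nk] by blast
  next
    fix q2 assume "q2 < length (blocks_word r s U') \<and> q2 \<noteq> q'"
    moreover have "linked_pos r s S m k U' U (Suc n) q' q" using Suc.prems(2) linked_pos_sym by simp
    ultimately obtain q1 where "answers (blocks_word r s U') q' q2 (blocks_word r s U) q q1"
      "eq0 r s S m (blocks_word r s U') q2 (blocks_word r s U) q1" "linked_pos r s S m k U' U n q2 q1"
      using swapped.linked_pos_response[OF _ Suc.prems(1)] by blast
    thus "\<exists>q1. answers (blocks_word r s U') q' q2 (blocks_word r s U) q q1 \<and>
        eq0 r s S m (blocks_word r s U) q1 (blocks_word r s U') q2 \<and>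
        wins r s S m n (blocks_word r s U) q1 (blocks_word r s U') q2"
      using Suc.IH[OF nk] eq0_sym linked_pos_sym by blast
  qed
qed simp

lemma eqk_half:
  assumes "1 \<le> k" "i1 < length (blocks_word r s U)"
  shows "\<exists>i2 < length (blocks_word r s U'). eq0 r s S m (blocks_word r s U) i1 (blocks_word r s U') i2 \<and>
    wins r s S m (k - 1) (blocks_word r s U) i1 (blocks_word r s U') i2"
proof -
  obtain j1 o1 where jj1: "j1 < length U" "o1 < length (block_word r s (U ! j1))" "i1 =
      block_pos r s U j1 + o1"
    using blocks_word_index_cases[OF assms(2)] by blast
  obtain j2 where "linked S m k U U' (k - 1) j1 j2" using linked_exists[of "k - 1" j1] jj1 by auto
  from linked_posI[OF this jj1(1,2)] show ?thesis
    using wins_of_linked_pos[of "k - 1"] jj1(3) by auto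
qed

lemma eqk_twin_words:
  assumes "1 \<le> k"
  shows "eqk r s S m k (blocks_word r s U) (blocks_word r s U')"
proof -
  interpret swapped: twin_words r s S m k K U' U by (rule twin_words_swap)
  show ?thesis
    unfolding eqk_def using eqk_half[OF assms] swapped.eqk_half[OF assms] eq0_sym wins_sym by metis
qed

end

section \<open>The words XX and XaX\<close>

definition factor_period :: "factor list" where
  "factor_period = [Fv, Fa, Fv, Fb, Fv]"

definition factors_XX :: "nat \<Rightarrow> factor list" where
  "factors_XX T = concat (replicate (2 * T) factor_period)"

definition factors_XaX :: "nat \<Rightarrow> factor list" where
  "factors_XaX T = concat (replicate T factor_period) @ [Fa] @ concat (replicate T factor_period)"

definition period_blocks :: "nat \<Rightarrow> block list" where
  "period_blocks S = replicate S Bv @ [Ba] @ replicate S Bv @ [Bb] @ replicate S Bv"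

lemma expand_factors_append: "expand_factors S (xs @ ys) = expand_factors S xs @ expand_factors S ys"
  by (simp add: expand_factors_def)
lemma expand_factors_concat_replicate:
  "expand_factors S (concat (replicate n xs)) =
    concat (replicate n (expand_factors S xs))"
  by (induction n) (auto simp: expand_factors_append)
lemma expand_factor_period: "expand_factors S factor_period = period_blocks S"
  by (simp add: factor_period_def expand_factor_def period_blocks_def)
lemma length_period_blocks: "length (period_blocks S) = period S"
  by (simp add: period_blocks_def period_def)
lemma blocks_word_concat_replicate:
  "blocks_word r s (concat (replicate n xs)) =
    concat (replicate n (blocks_word r s xs))"
  by (induction n) auto
lemma blocks_word_period_blocks:
  "blocks_word r s (period_blocks S) =
    wpow (vword r s) S @ boldA r @ wpow (vword r s) S @ boldB s @ wpow (vword r s) S"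
  by (simp add: period_blocks_def blocks_word_replicate_Bv block_word_def)

lemma expand_factors_XX: "expand_factors S (factors_XX T) = concat (replicate (2 * T) (period_blocks S))"
  by (simp add: factors_XX_def expand_factors_concat_replicate expand_factor_period)
lemma expand_factors_XaX:
  "expand_factors S (factors_XaX T) =
    concat (replicate T (period_blocks S)) @ [Ba] @ concat (replicate T (period_blocks S))"
  by (simp add: factors_XaX_def expand_factors_concat_replicate expand_factor_period
    expand_factors_append expand_factor_def)

lemma blocks_word_XX: "blocks_word r s (expand_factors S (factors_XX T)) = Xword r s S T @ Xword r s S T"
proof -
  let ?P = "blocks_word r s (period_blocks S)"
  have "concat (replicate (2 * T) ?P) = concat (replicate T ?P) @ concat (replicate T ?P)"
    by (simp add: mult_2 replicate_add)
  thus ?thesis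
    by (simp add: expand_factors_XX blocks_word_concat_replicate Xword_def wpow_def blocks_word_period_blocks)
qed

lemma blocks_word_XaX:
  "blocks_word r s (expand_factors S (factors_XaX T)) =
    Xword r s S T @ boldA r @ Xword r s S T"
  by (simp add: expand_factors_XaX blocks_word_concat_replicate Xword_def wpow_def
    blocks_word_period_blocks block_word_def)

lemma nth_concat_replicate: "i < n * length xs \<Longrightarrow> concat (replicate n xs) ! i = xs ! (i mod length xs)"
proof (induction n arbitrary: i)
  case 0 thus ?case by simp
next
  case (Suc n)
  show ?case
  proof (cases "i < length xs")
    case True thus ?thesis by (simp add: nth_append)
  next
    case False
    hence "i - length xs < n * length xs" using Suc.prems by simp
    hence "concat (replicate n xs) ! (i - length xs) = xs ! ((i - length xs) mod length xs)"
      using Suc.IH by simp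
    moreover have "(i - length xs) mod length xs = i mod length xs" using False by (simp add: le_mod_geq)
    ultimately show ?thesis using False by (simp add: nth_append)
  qed
qed

lemma nth_period_blocks: "i < period S \<Longrightarrow> period_blocks S ! i = period_block S i"
proof -
  assume i: "i < period S"
  consider "i < S" | "i = S" | "S < i" "i < 2 * S + 1" | "i = 2 * S + 1" | "2 * S + 1 < i" by linarith
  thus ?thesis
  proof cases
    case 1 thus ?thesis by (simp add: period_blocks_def period_block_def nth_append)
  next
    case 2 thus ?thesis by (simp add: period_blocks_def period_block_def nth_append)
  next
    case 3
    hence "i - S = Suc (i - S - 1)" by simp
    thus ?thesis using 3 by (simp add: period_blocks_def period_block_def nth_append)
  next
    case 4
    thus ?thesis by (simp add: period_blocks_def period_block_def nth_append)
  next
    case 5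
    hence "i - S = Suc (i - S - 1)" "i - S - 1 - S = Suc (i - S - 1 - S - 1)" by simp_all
    thus ?thesis using 5 i by (simp add: period_blocks_def period_block_def nth_append period_def)
  qed
qed

lemma period_pos: "0 < period S" by (simp add: period_def)

lemma length_XX_blocks: "length (expand_factors S (factors_XX T)) = 2 * T * period S"
  by (simp add: expand_factors_XX length_concat length_period_blocks sum_list_replicate)
lemma length_XaX_blocks: "length (expand_factors S (factors_XaX T)) = 2 * T * period S + 1"
  by (simp add: expand_factors_XaX length_concat length_period_blocks sum_list_replicate)

lemma nth_XX_blocks:
  "i < 2 * T * period S \<Longrightarrow> expand_factors S (factors_XX T) ! i =
    period_block S (i mod period S)"
  unfolding expand_factors_XX
    using nth_concat_replicate[of i "2 * T" "period_blocks S"] nth_period_blocks[of "i mod period S" S]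
      period_pos[of S]
  by (simp add: length_period_blocks)

lemma nth_XaX_blocks_left:
  "i < T * period S \<Longrightarrow> expand_factors S (factors_XaX T) ! i =
    period_block S (i mod period S)"
  unfolding expand_factors_XaX
    using nth_concat_replicate[of i T "period_blocks S"] nth_period_blocks[of "i mod period S" S]
      period_pos[of S]
  by (simp add: length_period_blocks nth_append length_concat sum_list_replicate)

lemma nth_XaX_blocks_middle: "expand_factors S (factors_XaX T) ! (T * period S) = Ba"
  unfolding expand_factors_XaX
    by (simp add: length_period_blocks nth_append length_concat sum_list_replicate)

lemma nth_XaX_blocks_right:
  "T * period S < i \<Longrightarrow> i < 2 * T * period S + 1 \<Longrightarrow>
    expand_factors S (factors_XaX T) ! i = period_block S ((i - 1) mod period S)"
proof -
  assume i: "T * period S < i" "i < 2 * T * period S + 1"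
  have "expand_factors S (factors_XaX T) ! i =
      concat (replicate T (period_blocks S)) ! (i - T * period S - 1)"
    unfolding expand_factors_XaX using i
      by (simp add: length_period_blocks nth_append length_concat sum_list_replicate)
  also have "... = period_block S ((i - T * period S - 1) mod period S)"
    using nth_concat_replicate[of "i - T * period S - 1" T "period_blocks S"]
      nth_period_blocks[of "(i - T * period S - 1) mod period S" S] period_pos[of S] i
    by (simp add: length_period_blocks)
  also have "(i - T * period S - 1) mod period S = (i - 1) mod period S"
  proof -
    have "i - 1 = (i - T * period S - 1) + T * period S" using i by simp
    thus ?thesis by (metis mod_mult_self1 mult.commute)
  qed
  finally show ?thesis .
qed

lemma v_alternating_factor_period_power: "v_alternating (concat (replicate n factor_period))"
proof (induction n)
  case 0 thus ?case by (simp add: v_alternating_def)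
next
  case (Suc n)
  have p: "v_alternating factor_period" unfolding v_alternating_def factor_period_def
    by (auto simp: less_Suc_eq nth_Cons split: nat.split)
  show ?case
  proof (cases n)
    case 0 thus ?thesis using p by simp
  next
    case (Suc n')
    have "hd (concat (replicate n factor_period)) = Fv" using Suc by (simp add: factor_period_def)
    thus ?thesis using v_alternating_append[OF p Suc.IH] Suc by (simp add: factor_period_def)
  qed
qed

lemma hd_factor_period_power: "1 \<le> n \<Longrightarrow> hd (concat (replicate n factor_period)) = Fv"
  by (cases n) (auto simp: factor_period_def)
lemma last_factor_period_power: "1 \<le> n \<Longrightarrow> last (concat (replicate n factor_period)) = Fv"
  by (induction n) (auto simp: factor_period_def)
lemma factor_period_power_ne: "1 \<le> n \<Longrightarrow> concat (replicate n factor_period) \<noteq> []"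
  by (cases n) (auto simp: factor_period_def)

lemma factors_XX_wf:
  "1 \<le> T \<Longrightarrow> factors_XX T \<noteq> [] \<and> hd (factors_XX T) = Fv \<and> last (factors_XX T) = Fv \<and>
    v_alternating (factors_XX T)"
  unfolding factors_XX_def
    using hd_factor_period_power[of "2 * T"] last_factor_period_power[of "2 * T"]
      factor_period_power_ne[of "2 * T"] v_alternating_factor_period_power by simp

lemma factors_XaX_wf:
  "1 \<le> T \<Longrightarrow> factors_XaX T \<noteq> [] \<and> hd (factors_XaX T) = Fv \<and> last (factors_XaX T) = Fv \<and>
    v_alternating (factors_XaX T)"
proof -
  assume T: "1 \<le> T"
  let ?C = "concat (replicate T factor_period)"
  have a: "v_alternating ([Fa] @ ?C)"
    using v_alternating_append[of "[Fa]" ?C] v_alternating_factor_period_power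
      hd_factor_period_power[OF T] factor_period_power_ne[OF T] by (simp add: v_alternating_def)
  have "v_alternating (?C @ [Fa] @ ?C)"
    using v_alternating_append[OF v_alternating_factor_period_power a] factor_period_power_ne[OF T]
      last_factor_period_power[OF T] by simp
  thus ?thesis unfolding factors_XaX_def
    using hd_factor_period_power[OF T] last_factor_period_power[OF T] factor_period_power_ne[OF T]
      by simp
qed

lemma nat_add_int_mod:
  assumes "0 < p" "0 \<le> int x + l"
  shows "nat (int x + l) mod p = nat ((int (x mod p) + l) mod int p)"
proof -
  have "int (nat (int x + l) mod p) = (int x + l) mod int p" using assms by (simp add: zmod_int)
  also have "... = (int x mod int p + l) mod int p" by (simp add: mod_add_left_eq)
  also have "... = (int (x mod p) + l) mod int p" by (simp add: zmod_int)
  finally show ?thesis by (metis nat_int)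
qed

lemma exists_residue_in_interval:
  fixes x p \<rho> :: nat
  assumes "0 < p" "\<rho> < p"
  shows "\<exists>j. x \<le> j \<and> j < x + p \<and> j mod p = \<rho>"
proof -
  define j0 where "j0 = \<rho> + (x div p) * p"
  have m0: "j0 mod p = \<rho>" unfolding j0_def using assms by (subst mod_mult_self1) simp
  have a: "(x div p) * p \<le> x" using div_mult_mod_eq[of x p, symmetric] by linarith
  have b: "x < (x div p) * p + p" using assms
    by (metis add.commute div_mult_mod_eq mod_less_divisor nat_add_left_cancel_less)
  have j0a: "j0 < x + p" using a assms unfolding j0_def by linarith
  have j0b: "x < j0 + p" using b unfolding j0_def by linarith
  show ?thesis
  proof (cases "x \<le> j0")
    case True thus ?thesis using m0 j0a by blast
  next
    case False
    have "(j0 + p) mod p = \<rho>" using m0 by simp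
    thus ?thesis using False j0b by (intro exI[of _ "j0 + p"]) auto
  qed
qed

lemma period_block_isolated:
  assumes "x < y" "period_block S (x mod period S) \<noteq> Bv" "period_block S (y mod period S) \<noteq> Bv"
  shows "S < y - x"
proof -
  let ?p = "period S"
  have rx: "x mod ?p = S \<or> x mod ?p = 2 * S + 1" "y mod ?p = S \<or> y mod ?p = 2 * S + 1"
    using assms by (auto simp: period_block_def split: if_splits)
  have dm: "x div ?p \<le> y div ?p" using assms(1) by (simp add: div_le_mono)
  show ?thesis
  proof (cases "x div ?p = y div ?p")
    case True
    have ex: "x = (x div ?p) * ?p + x mod ?p" and ey: "y = (x div ?p) * ?p + y mod ?p"
      using div_mult_mod_eq[of x ?p, symmetric] div_mult_mod_eq[of y ?p, symmetric] True by simp_all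
    hence "y - x = y mod ?p - x mod ?p" "x mod ?p < y mod ?p" using assms(1) by linarith+
    thus ?thesis using rx by auto
  next
    case False
    hence "x div ?p + 1 \<le> y div ?p" using dm by simp
    hence "(x div ?p + 1) * ?p \<le> (y div ?p) * ?p" by (rule mult_le_mono1)
    hence "(x div ?p) * ?p + ?p \<le> (y div ?p) * ?p" by simp
    moreover have "x mod ?p \<le> 2 * S + 1" "S \<le> y mod ?p" using rx by auto
    ultimately show ?thesis using div_mult_mod_eq[of x ?p, symmetric] div_mult_mod_eq[of y ?p, symmetric]
      unfolding period_def by linarith
  qed
qed

lemma period_block_before_multiple:
  assumes "x < c * period S" "period_block S (x mod period S) \<noteq> Bv"
  shows "S < c * period S - x"
proof -
  let ?p = "period S"
  have rx: "x mod ?p \<le> 2 * S + 1" using assms by (auto simp: period_block_def split: if_splits)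
  have "x div ?p < c" using assms(1) by (metis div_less_iff_less_mult period_pos)
  hence "x div ?p + 1 \<le> c" by simp
  hence "(x div ?p + 1) * ?p \<le> c * ?p" by (rule mult_le_mono1)
  hence "(x div ?p) * ?p + ?p \<le> c * ?p" by simp
  thus ?thesis using div_mult_mod_eq[of x ?p, symmetric] rx unfolding period_def by linarith
qed

lemma mod_mult_minus_Suc:
  fixes b p n :: nat
  assumes "b < p" "1 \<le> n"
  shows "(n * p - Suc b) mod p = p - Suc b"
proof -
  have "n * p = (n - 1) * p + p" using assms by (cases n) auto
  hence e: "n * p - Suc b = (p - Suc b) + (n - 1) * p" using assms by linarith
  show ?thesis unfolding e by (subst mod_mult_self1) (use assms in simp)
qed

lemma window_XX_blocks:
  assumes "D \<le> j" "j + D < 2 * T * period S"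
  shows "window D (expand_factors S (factors_XX T)) j = periodic_window S D (j mod period S)"
proof
  fix l
  show "window D (expand_factors S (factors_XX T)) j l = periodic_window S D (j mod period S) l"
  proof (cases "\<bar>l\<bar> \<le> int D")
    case True
    have r: "0 \<le> int j + l" "int j + l < int (length (expand_factors S (factors_XX T)))"
      using True assms length_XX_blocks[of S T] by linarith+
    have "nat (int j + l) < 2 * T * period S" using r length_XX_blocks[of S T] by linarith
    hence "expand_factors S (factors_XX T) ! nat (int j + l) =
        period_block S (nat ((int (j mod period S) + l) mod int (period S)))"
      using nth_XX_blocks nat_add_int_mod[OF period_pos r(1)] by simp
    thus ?thesis using True r unfolding window_def periodic_window_def by simp
  next
    case False thus ?thesis unfolding window_def periodic_window_def by simp
  qed
qed

lemma window_XaX_blocks_left: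
  assumes "D \<le> j" "j + D < T * period S"
  shows "window D (expand_factors S (factors_XaX T)) j = periodic_window S D (j mod period S)"
proof
  fix l
  show "window D (expand_factors S (factors_XaX T)) j l = periodic_window S D (j mod period S) l"
  proof (cases "\<bar>l\<bar> \<le> int D")
    case True
    have r: "0 \<le> int j + l" "int j + l < int (length (expand_factors S (factors_XaX T)))"
      using True assms length_XaX_blocks[of S T] by linarith+
    have "nat (int j + l) < T * period S" using r assms True by linarith
    hence "expand_factors S (factors_XaX T) ! nat (int j + l) =
        period_block S (nat ((int (j mod period S) + l) mod int (period S)))"
      using nth_XaX_blocks_left nat_add_int_mod[OF period_pos r(1)] by simp
    thus ?thesis using True r unfolding window_def periodic_window_def by simp
  next
    case False thus ?thesis unfolding window_def periodic_window_def by simp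
  qed
qed

lemma window_XaX_blocks_right:
  assumes "T * period S + D < j" "j + D < 2 * T * period S + 1"
  shows "window D (expand_factors S (factors_XaX T)) j = periodic_window S D ((j - 1) mod period S)"
proof
  fix l
  show "window D (expand_factors S (factors_XaX T)) j l = periodic_window S D ((j - 1) mod period S) l"
  proof (cases "\<bar>l\<bar> \<le> int D")
    case True
    have r: "0 \<le> int j + l" "int j + l < int (length (expand_factors S (factors_XaX T)))"
      using True assms length_XaX_blocks[of S T] by linarith+
    have i: "T * period S < nat (int j + l)" "nat (int j + l) < 2 * T * period S + 1"
      using r assms True by linarith+
    have r1: "0 \<le> int (j - 1) + l" using assms True by linarith
    have e: "nat (int j + l) - 1 = nat (int (j - 1) + l)" using assms True by linarith
    have "expand_factors S (factors_XaX T) ! nat (int j + l) =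
        period_block S (nat ((int ((j - 1) mod period S) + l) mod int (period S)))"
      using nth_XaX_blocks_right[OF i] nat_add_int_mod[OF period_pos r1] e by simp
    thus ?thesis using True r unfolding window_def periodic_window_def by simp
  next
    case False thus ?thesis unfolding window_def periodic_window_def by simp
  qed
qed

lemma nth_XaX_blocks_near_middle:
  assumes "1 \<le> T" "T * period S < i + S" "i < T * period S + S"
  shows "expand_factors S (factors_XaX T) ! i = period_block S (S + i - T * period S)"
proof -
  define J where "J = T * period S"
  define p where "p = period S"
  have p: "p = 3 * S + 2" "p \<le> J" unfolding p_def J_def using assms(1) by (simp add: period_def, simp)
  consider "i = J" | "i < J" | "J < i" by linarith
  thus ?thesis
  proof cases
    case 1 thus ?thesis using nth_XaX_blocks_middle[of S T] unfolding J_def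
      by (simp add: period_block_def)
  next
    case 2
    define b where "b = J - i - 1"
    have b: "b < p" "i = T * p - Suc b" using 2 assms p unfolding b_def J_def p_def by linarith+
    have "i mod p = p - Suc b" using mod_mult_minus_Suc[OF b(1) assms(1)] b(2) by simp
    hence "expand_factors S (factors_XaX T) ! i = period_block S (p - Suc b)"
      using nth_XaX_blocks_left[of i T S] 2 unfolding J_def p_def by simp
    moreover have "period_block S (p - Suc b) = Bv" "period_block S (S + i - J) = Bv"
      using 2 assms p unfolding b_def J_def period_block_def by auto
    ultimately show ?thesis unfolding J_def by simp
  next
    case 3
    have "i - 1 = (i - 1 - J) + T * p" using 3 unfolding J_def p_def by simp
    moreover have "i - 1 - J < p" using assms p unfolding J_def p_def by linarith
    ultimately have "(i - 1) mod p = i - 1 - J" by (metis mod_less mod_mult_self1)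
    moreover have "i < 2 * T * period S + 1" using assms p unfolding J_def p_def by linarith
    ultimately have "expand_factors S (factors_XaX T) ! i = period_block S (i - 1 - J)"
      using nth_XaX_blocks_right[of T S i] 3 unfolding J_def p_def by simp
    moreover have "period_block S (i - 1 - J) = Bv" "period_block S (S + i - J) = Bv"
      using 3 assms unfolding J_def period_block_def by auto
    ultimately show ?thesis unfolding J_def by simp
  qed
qed

lemma window_XaX_blocks_middle:
  assumes "T * period S \<le> j + D" "j \<le> T * period S + D" "2 * D + 1 \<le> S" "1 \<le> T"
  shows "window D (expand_factors S (factors_XaX T)) j = periodic_window S D (j + S - T * period S)"
proof
  fix l
  define J where "J = T * period S"
  have p: "period S = 3 * S + 2" "period S \<le> J" unfolding J_def using assms(4)
    by (simp add: period_def, simp)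
  show "window D (expand_factors S (factors_XaX T)) j l = periodic_window S D (j + S - T * period S) l"
  proof (cases "\<bar>l\<bar> \<le> int D")
    case True
    define i where "i = nat (int j + l)"
    have i: "0 \<le> int j + l" "int i = int j + l" "J < i + S" "i < J + S"
      using True assms p unfolding i_def J_def by linarith+
    have "i < length (expand_factors S (factors_XaX T))"
      using i p length_XaX_blocks[of S T] unfolding J_def by simp
    hence "window D (expand_factors S (factors_XaX T)) j l = Some (expand_factors S (factors_XaX T) ! i)"
      using True i(1) unfolding window_def i_def by simp
    moreover have "nat ((int (j + S - J) + l) mod int (period S)) = S + i - J"
    proof -
      have "int (j + S - J) + l = int (S + i - J)" using i assms unfolding J_def by linarith
      moreover have "S + i - J < period S" using i p by linarith
      ultimately show ?thesis by (simp add: zmod_int)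
    qed
    ultimately show ?thesis
      using True i nth_XaX_blocks_near_middle[of T S i] assms(4)
      unfolding periodic_window_def J_def by simp
  next
    case False thus ?thesis unfolding window_def periodic_window_def by simp
  qed
qed

lemma period_block_last: "i < S \<Longrightarrow> period_block S (period S - Suc i) = Bv"
  by (auto simp: period_block_def period_def)

lemma length_bounds:
  assumes SD: "2 * radius m k + 2 \<le> S" and T: "4 * k + 7 \<le> T"
  shows "2 * margin S m k k + 3 * period S + 2 \<le> 2 * T * period S"
    and "margin S m k k + radius m k + 1 \<le> T * period S"
proof -
  have Dp: "radius m k + 4 \<le> period S" using SD by (simp add: period_def)
  have "margin S m k k \<le> (k + 1) * (4 * period S)" unfolding margin_def using Dp
    by (intro mult_le_mono2) linarith
  hence E: "margin S m k k \<le> (4 * k + 4) * period S" by (simp add: algebra_simps)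
  have p2: "2 \<le> period S" by (simp add: period_def)
  have "(8 * k + 12) * period S \<le> (2 * T) * period S" using T by (intro mult_le_mono1) linarith
  thus "2 * margin S m k k + 3 * period S + 2 \<le> 2 * T * period S" using E p2 by (simp add: algebra_simps)
  have "(4 * k + 5) * period S \<le> T * period S" using T by (intro mult_le_mono1) linarith
  thus "margin S m k k + radius m k + 1 \<le> T * period S" using E Dp by (simp add: algebra_simps)
qed

lemma regular_XX_blocks:
  assumes "1 \<le> r" "1 \<le> s" and SD: "2 * radius m k + 2 \<le> S" and T: "4 * k + 7 \<le> T"
  shows "regular_word r s S m k (expand_factors S (factors_XX T))"
proof -
  interpret nonempty_ab r s using assms(1,2) by unfold_locales
  let ?U = "expand_factors S (factors_XX T)"
  have L: "length ?U = 2 * T * period S" by (rule length_XX_blocks)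
  have T1: "1 \<le> T" and S1: "1 \<le> S" using SD T by (auto simp: radius_def)
  have p: "S < period S" by (simp add: period_def)
  have len: "2 * margin S m k k + 3 * period S + 2 \<le> length ?U" using length_bounds[OF SD T] L by simp
  show ?thesis
  proof (rule regular_wordI[OF len])
    fix i assume i: "i < S"
    hence "i < 2 * T * period S" using L len p by linarith
    thus "?U ! i = Bv" using nth_XX_blocks i p by (simp add: period_block_def)
    have "length ?U - Suc i < 2 * T * period S" using L len by linarith
    hence "?U ! (length ?U - Suc i) = period_block S ((2 * T * period S - Suc i) mod period S)"
      using nth_XX_blocks L by simp
    also have "(2 * T * period S - Suc i) mod period S = period S - Suc i"
      using mod_mult_minus_Suc[of i "period S" "2 * T"] i p T1 by (simp add: mult.assoc)
    finally show "?U ! (length ?U - Suc i) = Bv" using period_block_last i by simp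
  next
    fix i i' assume "i < i'" "i' < length ?U" "?U ! i \<noteq> Bv" "?U ! i' \<noteq> Bv"
    thus "S < i' - i" using period_block_isolated nth_XX_blocks L by (metis order.strict_trans)
  next
    fix D j assume "D \<le> j" "j + D < length ?U"
    thus "\<exists>\<rho> < period S. window D ?U j = periodic_window S D \<rho>"
      using window_XX_blocks L period_pos by (metis mod_less_divisor)
  next
    fix D x \<rho> assume a: "\<rho> < period S" "D \<le> x" "x + 3 * period S + D < length ?U"
    obtain j where j: "x \<le> j" "j < x + period S" "j mod period S = \<rho>"
      using exists_residue_in_interval[OF period_pos a(1)] by blast
    have "window D ?U j = periodic_window S D \<rho>" using window_XX_blocks[of D j T S] j a L by simp
    thus "\<exists>j. x \<le> j \<and> j \<le> x + 3 * period S \<and> window D ?U j = periodic_window S D \<rho>"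
      using j by (intro exI[of _ j]) auto
  next
    show "nbhds r s S m (blocks_word r s ?U) = block_nbhds r s m ?U"
      using nbhds_expand_factors[of S "factors_XX T" m] factors_XX_wf[OF T1] S1 by simp
  qed
qed

lemma XaX_blocks_prefix:
  assumes "1 \<le> T" "i < S"
  shows "expand_factors S (factors_XaX T) ! i = Bv"
proof -
  have "S < period S" by (simp add: period_def)
  moreover have "period S \<le> T * period S" using assms(1) by simp
  ultimately have "i < T * period S" using assms(2) by linarith
  thus ?thesis using nth_XaX_blocks_left[of i T S] assms(2) \<open>S < period S\<close>
    by (simp add: period_block_def)
qed

lemma XaX_blocks_suffix:
  assumes "1 \<le> T" "i < S"
  shows "expand_factors S (factors_XaX T) ! (length (expand_factors S (factors_XaX T)) - Suc i) = Bv"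
proof -
  define J where "J = T * period S"
  have "S < period S" by (simp add: period_def)
  moreover have "period S \<le> J" using assms(1) unfolding J_def by simp
  ultimately have "J < 2 * J - i" "2 * J - i < 2 * T * period S + 1"
    using assms unfolding J_def by linarith+
  hence "expand_factors S (factors_XaX T) ! (2 * J - i) = period_block S ((2 * J - i - 1) mod period S)"
    using nth_XaX_blocks_right unfolding J_def by blast
  also have "(2 * J - i - 1) mod period S = period S - Suc i"
    using mod_mult_minus_Suc[of i "period S" "2 * T"] assms \<open>S < period S\<close> unfolding J_def
    by (simp add: mult.assoc)
  finally show ?thesis using period_block_last assms length_XaX_blocks[of S T] unfolding J_def
    by (simp add: mult.assoc)
qed

lemma XaX_blocks_isolated:
  assumes "i < i'" "i' < length (expand_factors S (factors_XaX T))"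
    "expand_factors S (factors_XaX T) ! i \<noteq> Bv" "expand_factors S (factors_XaX T) ! i' \<noteq> Bv"
  shows "S < i' - i"
proof -
  let ?U = "expand_factors S (factors_XaX T)"
  define J where "J = T * period S"
  have L: "length ?U = 2 * J + 1" unfolding J_def using length_XaX_blocks[of S T] by simp
  have lo: "\<And>i. i < J \<Longrightarrow> ?U ! i = period_block S (i mod period S)"
    unfolding J_def by (rule nth_XaX_blocks_left)
  have hi: "\<And>i. J < i \<Longrightarrow> i < 2 * J + 1 \<Longrightarrow> ?U ! i = period_block S ((i - 1) mod period S)"
    unfolding J_def using nth_XaX_blocks_right by simp
  consider "i' < J" | "i < J" "J \<le> i'" | "i = J" | "J < i" by linarith
  thus ?thesis
  proof cases
    case 1 thus ?thesis using assms lo period_block_isolated by (metis order.strict_trans)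
  next
    case 2
    have "S < T * period S - i" using period_block_before_multiple[of i T S] 2 assms(3) lo
      unfolding J_def by simp
    thus ?thesis using 2 unfolding J_def by linarith
  next
    case 3
    have "period_block S ((i' - 1) mod period S) \<noteq> Bv" using hi assms 3 L by simp
    hence "S \<le> (i' - 1) mod period S" by (auto simp: period_block_def split: if_splits)
    moreover have "(i' - 1) mod period S = (i' - 1 - J) mod period S"
    proof -
      have "i' - 1 = (i' - 1 - J) + T * period S" using assms 3 unfolding J_def by simp
      thus ?thesis by (metis mod_mult_self1)
    qed
    moreover have "(i' - 1 - J) mod period S \<le> i' - 1 - J" by simp
    ultimately show ?thesis using assms 3 by linarith
  next
    case 4
    have "period_block S ((i - 1) mod period S) \<noteq> Bv" "period_block S ((i' - 1) mod period S) \<noteq> Bv"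
      using hi assms 4 L by simp_all
    moreover have "i - 1 < i' - 1" using assms 4 by linarith
    ultimately have "S < (i' - 1) - (i - 1)" using period_block_isolated by blast
    thus ?thesis using assms 4 by linarith
  qed
qed

lemma XaX_blocks_window_periodic:
  assumes "2 * D + 1 \<le> S" "1 \<le> T" "D \<le> j" "j + D < length (expand_factors S (factors_XaX T))"
  shows "\<exists>\<rho> < period S. window D (expand_factors S (factors_XaX T)) j = periodic_window S D \<rho>"
proof -
  define J where "J = T * period S"
  have L: "length (expand_factors S (factors_XaX T)) = 2 * J + 1"
    unfolding J_def using length_XaX_blocks[of S T] by simp
  consider "j + D < J" | "J + D < j" | "J \<le> j + D" "j \<le> J + D" by linarith
  thus ?thesis
  proof cases
    case 1
    hence "window D (expand_factors S (factors_XaX T)) j = periodic_window S D (j mod period S)"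
      using window_XaX_blocks_left[of D j T S] assms unfolding J_def by simp
    thus ?thesis using period_pos by (meson mod_less_divisor)
  next
    case 2
    hence "window D (expand_factors S (factors_XaX T)) j = periodic_window S D ((j - 1) mod period S)"
      using window_XaX_blocks_right[of T S D j] assms length_XaX_blocks[of S T] unfolding J_def by simp
    thus ?thesis using period_pos by (meson mod_less_divisor)
  next
    case 3
    have "j + S - J < period S" using 3 assms unfolding period_def by linarith
    thus ?thesis using window_XaX_blocks_middle[of T S j D] 3 assms unfolding J_def by blast
  qed
qed

lemma XaX_blocks_window_covers:
  assumes "2 * D + 1 \<le> S" "\<rho> < period S" "D \<le> x"
    "x + 3 * period S + D < length (expand_factors S (factors_XaX T))"
  shows "\<exists>j. x \<le> j \<and> j \<le> x + 3 * period S \<and> window D (expand_factors S (factors_XaX T)) j =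
      periodic_window S D \<rho>"
proof -
  define J where "J = T * period S"
  have L: "length (expand_factors S (factors_XaX T)) = 2 * J + 1"
    unfolding J_def using length_XaX_blocks[of S T] by simp
  have Dp: "2 * D \<le> period S" using assms(1) unfolding period_def by linarith
  consider "x + period S + D \<le> J" | "J + D < x" | "J < x + period S + D" "x \<le> J + D" by linarith
  thus ?thesis
  proof cases
    case 1
    obtain j where j: "x \<le> j" "j < x + period S" "j mod period S = \<rho>"
      using exists_residue_in_interval[OF period_pos assms(2)] by blast
    have "window D (expand_factors S (factors_XaX T)) j = periodic_window S D \<rho>"
      using window_XaX_blocks_left[of D j T S] j assms 1 unfolding J_def by simp
    thus ?thesis using j by (intro exI[of _ j]) auto
  next
    case 2
    obtain j0 where j: "x - 1 \<le> j0" "j0 < x - 1 + period S" "j0 mod period S = \<rho>"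
      using exists_residue_in_interval[OF period_pos assms(2)] by blast
    have "window D (expand_factors S (factors_XaX T)) (Suc j0) =
        periodic_window S D ((Suc j0 - 1) mod period S)"
      using window_XaX_blocks_right[of T S D "Suc j0"] j assms 2 L unfolding J_def by simp
    thus ?thesis using j 2 by (intro exI[of _ "Suc j0"]) auto
  next
    case 3
    obtain j0 where j: "J + D \<le> j0" "j0 < J + D + period S" "j0 mod period S = \<rho>"
      using exists_residue_in_interval[OF period_pos assms(2)] by blast
    have "window D (expand_factors S (factors_XaX T)) (Suc j0) =
        periodic_window S D ((Suc j0 - 1) mod period S)"
      using window_XaX_blocks_right[of T S D "Suc j0"] j assms 3 L Dp unfolding J_def by simp
    thus ?thesis using j 3 Dp by (intro exI[of _ "Suc j0"]) auto
  qed
qed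

lemma regular_XaX_blocks:
  assumes "1 \<le> r" "1 \<le> s" and SD: "2 * radius m k + 2 \<le> S" and T: "4 * k + 7 \<le> T"
  shows "regular_word r s S m k (expand_factors S (factors_XaX T))"
proof -
  interpret nonempty_ab r s using assms(1,2) by unfold_locales
  have T1: "1 \<le> T" and S1: "1 \<le> S" and DS: "\<And>D. D \<le> radius m k \<Longrightarrow> 2 * D + 1 \<le> S"
    using SD T by (auto simp: radius_def)
  show ?thesis
  proof (rule regular_wordI)
    show "2 * margin S m k k + 3 * period S + 2 \<le> length (expand_factors S (factors_XaX T))"
      using length_bounds[OF SD T] length_XaX_blocks[of S T] by simp
    show "nbhds r s S m (blocks_word r s (expand_factors S (factors_XaX T))) =
        block_nbhds r s m (expand_factors S (factors_XaX T))"
      using nbhds_expand_factors[of S "factors_XaX T" m] factors_XaX_wf[OF T1] S1 by simp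
  qed (use T1 DS XaX_blocks_prefix XaX_blocks_suffix XaX_blocks_isolated XaX_blocks_window_periodic
      XaX_blocks_window_covers in auto)
qed

lemma twin_words_XX_XaX:
  assumes rs_pos: "1 \<le> r" "1 \<le> s" and SD: "2 * radius m k + 2 \<le> S" and T: "4 * k + 7 \<le> T"
  shows "twin_words r s S m k (T * period S) (expand_factors S (factors_XX T)) (expand_factors S (factors_XaX T))"
proof -
  let ?U = "expand_factors S (factors_XX T)" and ?U' = "expand_factors S (factors_XaX T)"
  have L: "length ?U = 2 * (T * period S)" "length ?U' = 2 * (T * period S) + 1"
    using length_XX_blocks[of S T] length_XaX_blocks[of S T] by simp_all
  have prefix: "?U ! i = ?U' ! i" if "i < T * period S" for i
    using nth_XX_blocks[of i T S] nth_XaX_blocks_left[of i T S] that by simp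
  have suffix: "?U ! (length ?U - Suc i) = ?U' ! (length ?U' - Suc i)" if "i < T * period S" for i
  proof -
    have "length ?U - Suc i < 2 * T * period S" "T * period S < length ?U' - Suc i"
      "length ?U' - Suc i < 2 * T * period S + 1" "length ?U' - Suc i - 1 = length ?U - Suc i"
      using L that by simp_all
    thus ?thesis using nth_XX_blocks nth_XaX_blocks_right by simp
  qed
  show ?thesis
    using regular_XX_blocks[OF rs_pos SD T] regular_XaX_blocks[OF rs_pos SD T] SD length_bounds[OF SD T] L
      prefix suffix
    by unfold_locales auto
qed

theorem lemma14:
  fixes r s m k :: nat
  assumes "r \<ge> 1" and "s \<ge> 1" and "k \<ge> 1"
  shows "\<exists>R. \<forall>S T. S \<ge> R \<and> T \<ge> R \<longrightarrow>
           eqk r s S m k (Xword r s S T @ Xword r s S T)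
                         (Xword r s S T @ boldA r @ Xword r s S T)"
proof (intro exI[of _ "4 * m + 4 * k + 10"] allI impI)
  fix S T assume "4 * m + 4 * k + 10 \<le> S \<and> 4 * m + 4 * k + 10 \<le> T"
  hence "2 * radius m k + 2 \<le> S" "4 * k + 7 \<le> T" by (simp_all add: radius_def)
  from twin_words.eqk_twin_words[OF twin_words_XX_XaX[OF assms(1,2) this] assms(3)]
  show "eqk r s S m k (Xword r s S T @ Xword r s S T) (Xword r s S T @ boldA r @ Xword r s S T)"
    by (simp add: blocks_word_XX blocks_word_XaX)
qed

end
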